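(* Let $(\mathcal{C},\mathbb{E},\mathfrak{s})$ be an extriangulated category with enough injective objects and enough projective morphisms, and let $\mathbb{F}\subseteq\mathbb{E}$ be an additive subfunctor having enough injective morphisms. Then: (1) the pair $\big({}^{\perp_{\mathbb{E}}}(\mathbb{F}\text{-}\mathrm{inj}),\ ({}^{\perp_{\mathbb{E}}}(\mathbb{F}\text{-}\mathrm{inj}))^{\perp_{\mathbb{E}}}\big)$ is a complete $\mathbb{E}$-cotorsion pair of ideals; (2) $\mathrm{Ph}(\mathbb{F})^{\perp_{\mathbb{E}}}=\mathrm{Ph}(\mathbb{F})^\star\text{-}\mathrm{inj}$, and $\mathrm{Ph}(\mathbb{F})^{\perp_{\mathbb{E}}}$ is the minimal ideal containing $\mathbb{F}\text{-}\mathrm{inj}$ and satisfying property (C), i.e. it contains $\mathbb{F}\text{-}\mathrm{inj}$, satisfies (C), and is contained in every ideal that contains $\mathbb{F}\text{-}\mathrm{inj}$ and satisfies (C); (3) $\mathrm{Ph}(\mathbb{F})^\star$ is the maximal additive subfunctor of $\mathbb{F}$ having enough special injective morphisms, i.e. $\mathrm{Ph}(\mathbb{F})^\star\subseteq\mathbb{F}$, it has enough special injective morphisms, and it contains every additive subfunctor $\mathbb{F}'\subseteq\mathbb{F}$ having enough special injective morphisms.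
   Context: An extriangulated category $(\mathcal{C},\mathbb{E},\mathfrak{s})$ (Nakaoka–Palu): additive $\mathcal{C}$, biadditive $\mathbb{E}:\mathcal{C}^{\mathrm{op}}\times\mathcal{C}\to\mathrm{Ab}$, additive realization $\mathfrak{s}$ assigning to each $\delta\in\mathbb{E}(C,A)$ an equivalence class of sequences $A\to B\to C$, forming $\mathbb{E}$-triangles $A\to B\to C\overset{\delta}{\dashrightarrow}$, satisfying (ET1)–(ET4), (ET3)$^{\mathrm{op}}$, (ET4)$^{\mathrm{op}}$. Notation $a_\star\delta=\mathbb{E}(C,a)(\delta)$, $c^\star\delta=\mathbb{E}(c,A)(\delta)$; a morphism of $\mathbb{E}$-triangles is a commuting triple $(a,b,c)$ with $a_\star\delta=c^\star\delta'$. Injective object $E$: $\mathbb{E}(C,E)=0$ for all $C$; enough injective objects: every $A$ admits an $\mathbb{E}$-triangle $A\to E\to C\overset{\delta}{\dashrightarrow}$ with $E$ injective. Enough projective morphisms: every $C$ admits an $\mathbb{E}$-triangle $K\to P\xrightarrow{p}C\overset{\gamma}{\dashrightarrow}$ with $p^\star\delta=0$ for all $\delta\in\mathbb{E}(C,A)$. Ideal: class of morphisms with zeros, closed under sums and two-sided composition. Additive subfunctor $\mathbb{F}$: subgroups $\mathbb{F}(C,A)\subseteq\mathbb{E}(C,A)$ stable under $a_\star,c^\star$; $\mathbb{F}$-triangles have extension in $\mathbb{F}$. $\mathrm{Ph}(\mathbb{F})$: morphisms $\varphi:X\to C$ with $\varphi^\star\delta\in\mathbb{F}(X,A)$ for all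 $\delta\in\mathbb{E}(C,A)$. $\mathbb{F}\text{-}\mathrm{inj}$: $i:A\to Y$ with $i_\star\delta=0$ for all $\delta\in\mathbb{F}(C,A)$. For an ideal $\mathcal{I}$, $\mathcal{I}^\star(X,A)=\{i^\star\delta\mid i\in\mathcal{I}(X,C),\delta\in\mathbb{E}(C,A)\}$. $\mathbb{F}$ has enough injective morphisms: every $A$ admits an $\mathbb{F}$-triangle $A\xrightarrow{e}B\to C\overset{\delta}{\dashrightarrow}$ with $e\in\mathbb{F}\text{-}\mathrm{inj}$; enough special injective morphisms: moreover there is an $\mathbb{E}$-triangle $A\to B'\to C'\overset{\delta'}{\dashrightarrow}$ and a morphism $(\mathrm{id}_A,b,\varphi)$ from the former to it with $\varphi\in\mathrm{Ph}(\mathbb{F})$. $\mathcal{M}^{\perp_{\mathbb{E}}}=\{g:A\to Y\mid m^\star g_\star\delta=0\ \forall m\in\mathcal{M},\,m:X\to C,\ \forall\delta\in\mathbb{E}(C,A)\}$; ${}^{\perp_{\mathbb{E}}}\mathcal{M}=\{g:X\to C\mid g^\star m_\star\delta=0\ \forall m\in\mathcal{M},\,m:A\to Y,\ \forall\delta\in\mathbb{E}(C,A)\}$. $\mathbb{E}$-cotorsion pair: $\mathcal{I}={}^{\perp_{\mathbb{E}}}\mathcal{J}$, $\mathcal{J}=\mathcal{I}^{\perp_{\mathbb{E}}}$; complete if $\mathcal{I}$ is special precovering (each $C$ has $i:X\to C$ in $\mathcal{I}$ with a morphism $(j,b,\mathrm{id}_C)$ of $\mathbb{E}$-triangles from some $A\to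 B\to C\overset{\delta}{\dashrightarrow}$ to some $A'\to X\xrightarrow{i}C\overset{\delta'}{\dashrightarrow}$, $j\in\mathcal{I}^{\perp_{\mathbb{E}}}$) and $\mathcal{J}$ is special preenveloping (each $A$ has $e:A\to X$ in $\mathcal{J}$ with a morphism $(\mathrm{id}_A,b,j)$ from some $A\xrightarrow{e}X\to Y\overset{\delta}{\dashrightarrow}$ to some $A\to B\to C\overset{\delta'}{\dashrightarrow}$, $j\in{}^{\perp_{\mathbb{E}}}\mathcal{J}$). Property (C) of an ideal $\mathcal{K}$: for every morphism of $\mathbb{E}$-triangles $(f,g,h)$ from $A\to B\to E\overset{\gamma}{\dashrightarrow}$ to $X\to Y\to Z\overset{\delta}{\dashrightarrow}$ with $f\in\mathcal{K}$ and $E$ injective, one has $g\in\mathcal{K}$. *)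

theory Defs
  imports Main
begin

section \<open>Extriangulated categories (Nakaoka--Palu), arrow-style encoding\<close>

text \<open>Objects have type 'o, morphisms type 'm (each morphism carries its source and
target), extensions type 'e (each extension delta in E(C,A) carries C = eC delta and
A = eA delta).  The realization s is encoded as the relation  real delta x y, meaning
that the sequence  A --x--> B --y--> C  belongs to the equivalence class s(delta).\<close>

record ('o, 'm, 'e) etcat =
  Ob    :: "'o set"
  Mor   :: "'m set"
  src   :: "'m \<Rightarrow> 'o"
  tgt   :: "'m \<Rightarrow> 'o"
  idm   :: "'o \<Rightarrow> 'm"
  cmp   :: "'m \<Rightarrow> 'm \<Rightarrow> 'm"          \<comment> \<open>cmp g f = g o f\<close>
  madd  :: "'m \<Rightarrow> 'm \<Rightarrow> 'm"
  mneg  :: "'m \<Rightarrow> 'm"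
  mzero :: "'o \<Rightarrow> 'o \<Rightarrow> 'm"
  Ex    :: "'e set"
  eC    :: "'e \<Rightarrow> 'o"
  eA    :: "'e \<Rightarrow> 'o"
  eadd  :: "'e \<Rightarrow> 'e \<Rightarrow> 'e"
  eneg  :: "'e \<Rightarrow> 'e"
  ezero :: "'o \<Rightarrow> 'o \<Rightarrow> 'e"         \<comment> \<open>zero of E(C,A)\<close>
  pull  :: "'m \<Rightarrow> 'e \<Rightarrow> 'e"          \<comment> \<open>pull c delta = c^* delta\<close>
  push  :: "'m \<Rightarrow> 'e \<Rightarrow> 'e"          \<comment> \<open>push a delta = a_* delta\<close>
  real  :: "'e \<Rightarrow> 'm \<Rightarrow> 'm \<Rightarrow> bool"

definition Hom :: "('o,'m,'e) etcat \<Rightarrow> 'o \<Rightarrow> 'o \<Rightarrow> 'm set" where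
  "Hom X A B = {f \<in> Mor X. src X f = A \<and> tgt X f = B}"

definition E :: "('o,'m,'e) etcat \<Rightarrow> 'o \<Rightarrow> 'o \<Rightarrow> 'e set" where
  "E X C A = {d \<in> Ex X. eC X d = C \<and> eA X d = A}"

definition is_category :: "('o,'m,'e) etcat \<Rightarrow> bool" where
  "is_category X \<longleftrightarrow>
     (\<forall>f\<in>Mor X. src X f \<in> Ob X \<and> tgt X f \<in> Ob X) \<and>
     (\<forall>A\<in>Ob X. idm X A \<in> Hom X A A) \<and>
     (\<forall>f\<in>Mor X. \<forall>g\<in>Mor X. tgt X f = src X g \<longrightarrow> cmp X g f \<in> Hom X (src X f) (tgt X g)) \<and>
     (\<forall>f\<in>Mor X. \<forall>g\<in>Mor X. \<forall>h\<in>Mor X. tgt X f = src X g \<and> tgt X g = src X h \<longrightarrow>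
        cmp X h (cmp X g f) = cmp X (cmp X h g) f) \<and>
     (\<forall>f\<in>Mor X. cmp X (idm X (tgt X f)) f = f \<and> cmp X f (idm X (src X f)) = f)"

definition preadditive :: "('o,'m,'e) etcat \<Rightarrow> bool" where
  "preadditive X \<longleftrightarrow> is_category X \<and>
     (\<forall>A\<in>Ob X. \<forall>B\<in>Ob X.
        mzero X A B \<in> Hom X A B \<and>
        (\<forall>f\<in>Hom X A B. \<forall>g\<in>Hom X A B. madd X f g \<in> Hom X A B) \<and>
        (\<forall>f\<in>Hom X A B. mneg X f \<in> Hom X A B) \<and>
        (\<forall>f\<in>Hom X A B. \<forall>g\<in>Hom X A B. \<forall>h\<in>Hom X A B.
            madd X (madd X f g) h = madd X f (madd X g h)) \<and>
        (\<forall>f\<in>Hom X A B. \<forall>g\<in>Hom X A B. madd X f g = madd X g f) \<and>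
        (\<forall>f\<in>Hom X A B. madd X (mzero X A B) f = f) \<and>
        (\<forall>f\<in>Hom X A B. madd X f (mneg X f) = mzero X A B) \<and>
        (\<forall>f\<in>Hom X A B. \<forall>g\<in>Hom X A B. \<forall>h\<in>Mor X. src X h = B \<longrightarrow>
            cmp X h (madd X f g) = madd X (cmp X h f) (cmp X h g)) \<and>
        (\<forall>f\<in>Hom X A B. \<forall>g\<in>Hom X A B. \<forall>h\<in>Mor X. tgt X h = A \<longrightarrow>
            cmp X (madd X f g) h = madd X (cmp X f h) (cmp X g h)))"

definition zero_obj :: "('o,'m,'e) etcat \<Rightarrow> 'o \<Rightarrow> bool" where
  "zero_obj X Z \<longleftrightarrow> Z \<in> Ob X \<and>
     (\<forall>A\<in>Ob X. (\<exists>!f. f \<in> Hom X Z A) \<and> (\<exists>!f. f \<in> Hom X A Z))"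

definition is_biprod :: "('o,'m,'e) etcat \<Rightarrow> 'o \<Rightarrow> 'o \<Rightarrow> 'o \<Rightarrow> 'm \<Rightarrow> 'm \<Rightarrow> 'm \<Rightarrow> 'm \<Rightarrow> bool" where
  "is_biprod X A B S i1 i2 p1 p2 \<longleftrightarrow> S \<in> Ob X \<and>
     i1 \<in> Hom X A S \<and> i2 \<in> Hom X B S \<and> p1 \<in> Hom X S A \<and> p2 \<in> Hom X S B \<and>
     cmp X p1 i1 = idm X A \<and> cmp X p2 i2 = idm X B \<and>
     cmp X p1 i2 = mzero X B A \<and> cmp X p2 i1 = mzero X A B \<and>
     madd X (cmp X i1 p1) (cmp X i2 p2) = idm X S"

definition additive_cat :: "('o,'m,'e) etcat \<Rightarrow> bool" where
  "additive_cat X \<longleftrightarrow> preadditive X \<and> (\<exists>Z. zero_obj X Z) \<and>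
     (\<forall>A\<in>Ob X. \<forall>B\<in>Ob X. \<exists>S i1 i2 p1 p2. is_biprod X A B S i1 i2 p1 p2)"

text \<open>(ET1): E is a biadditive functor C^op x C -> Ab.\<close>
definition biadditive_E :: "('o,'m,'e) etcat \<Rightarrow> bool" where
  "biadditive_E X \<longleftrightarrow>
     (\<forall>d\<in>Ex X. eC X d \<in> Ob X \<and> eA X d \<in> Ob X) \<and>
     (\<forall>C\<in>Ob X. \<forall>A\<in>Ob X.
        ezero X C A \<in> E X C A \<and>
        (\<forall>d\<in>E X C A. \<forall>d'\<in>E X C A. eadd X d d' \<in> E X C A) \<and>
        (\<forall>d\<in>E X C A. eneg X d \<in> E X C A) \<and>
        (\<forall>d\<in>E X C A. \<forall>d'\<in>E X C A. \<forall>d''\<in>E X C A.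
            eadd X (eadd X d d') d'' = eadd X d (eadd X d' d'')) \<and>
        (\<forall>d\<in>E X C A. \<forall>d'\<in>E X C A. eadd X d d' = eadd X d' d) \<and>
        (\<forall>d\<in>E X C A. eadd X (ezero X C A) d = d) \<and>
        (\<forall>d\<in>E X C A. eadd X d (eneg X d) = ezero X C A)) \<and>
     (\<forall>d\<in>Ex X. \<forall>c\<in>Mor X. tgt X c = eC X d \<longrightarrow> pull X c d \<in> E X (src X c) (eA X d)) \<and>
     (\<forall>d\<in>Ex X. \<forall>a\<in>Mor X. src X a = eA X d \<longrightarrow> push X a d \<in> E X (eC X d) (tgt X a)) \<and>
     (\<forall>d\<in>Ex X. pull X (idm X (eC X d)) d = d \<and> push X (idm X (eA X d)) d = d) \<and>
     (\<forall>d\<in>Ex X. \<forall>c\<in>Mor X. \<forall>c'\<in>Mor X. tgt X c = eC X d \<and> tgt X c' = src X c \<longrightarrow>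
        pull X (cmp X c c') d = pull X c' (pull X c d)) \<and>
     (\<forall>d\<in>Ex X. \<forall>a\<in>Mor X. \<forall>a'\<in>Mor X. src X a = eA X d \<and> src X a' = tgt X a \<longrightarrow>
        push X (cmp X a' a) d = push X a' (push X a d)) \<and>
     (\<forall>d\<in>Ex X. \<forall>a\<in>Mor X. \<forall>c\<in>Mor X. src X a = eA X d \<and> tgt X c = eC X d \<longrightarrow>
        push X a (pull X c d) = pull X c (push X a d)) \<and>
     (\<forall>d\<in>Ex X. \<forall>d'\<in>Ex X. \<forall>c\<in>Mor X. eC X d' = eC X d \<and> eA X d' = eA X d \<and> tgt X c = eC X d \<longrightarrow>
        pull X c (eadd X d d') = eadd X (pull X c d) (pull X c d')) \<and>
     (\<forall>d\<in>Ex X. \<forall>d'\<in>Ex X. \<forall>a\<in>Mor X. eC X d' = eC X d \<and> eA X d' = eA X d \<and> src X a = eA X d \<longrightarrow>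
        push X a (eadd X d d') = eadd X (push X a d) (push X a d')) \<and>
     (\<forall>d\<in>Ex X. \<forall>c\<in>Mor X. \<forall>c'\<in>Mor X. tgt X c = eC X d \<and> tgt X c' = eC X d \<and> src X c' = src X c \<longrightarrow>
        pull X (madd X c c') d = eadd X (pull X c d) (pull X c' d)) \<and>
     (\<forall>d\<in>Ex X. \<forall>a\<in>Mor X. \<forall>a'\<in>Mor X. src X a = eA X d \<and> src X a' = eA X d \<and> tgt X a' = tgt X a \<longrightarrow>
        push X (madd X a a') d = eadd X (push X a d) (push X a' d))"

definition iso :: "('o,'m,'e) etcat \<Rightarrow> 'm \<Rightarrow> bool" where
  "iso X b \<longleftrightarrow> b \<in> Mor X \<and> (\<exists>b'\<in>Hom X (tgt X b) (src X b).
      cmp X b' b = idm X (src X b) \<and> cmp X b b' = idm X (tgt X b))"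

definition seq_equiv :: "('o,'m,'e) etcat \<Rightarrow> 'm \<Rightarrow> 'm \<Rightarrow> 'm \<Rightarrow> 'm \<Rightarrow> bool" where
  "seq_equiv X x y x' y' \<longleftrightarrow> x' \<in> Mor X \<and> y' \<in> Mor X \<and>
     src X x' = src X x \<and> tgt X x' = src X y' \<and> tgt X y' = tgt X y \<and>
     (\<exists>b. iso X b \<and> src X b = tgt X x \<and> tgt X b = tgt X x' \<and>
          cmp X b x = x' \<and> cmp X y' b = y)"

text \<open>(ET2): s is an additive realization of E.\<close>
definition additive_realization :: "('o,'m,'e) etcat \<Rightarrow> bool" where
  "additive_realization X \<longleftrightarrow>
     \<comment> \<open>s(delta) is an equivalence class of sequences A -> B -> C\<close>
     (\<forall>d x y. real X d x y \<longrightarrow> d \<in> Ex X \<and> x \<in> Mor X \<and> y \<in> Mor X \<and>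
        src X x = eA X d \<and> tgt X x = src X y \<and> tgt X y = eC X d) \<and>
     (\<forall>d\<in>Ex X. \<exists>x y. real X d x y) \<and>
     (\<forall>d x y x' y'. real X d x y \<longrightarrow> (real X d x' y' \<longleftrightarrow> seq_equiv X x y x' y')) \<and>
     \<comment> \<open>realization condition\<close>
     (\<forall>d x y d' x' y' a c. real X d x y \<and> real X d' x' y' \<and>
        a \<in> Hom X (eA X d) (eA X d') \<and> c \<in> Hom X (eC X d) (eC X d') \<and>
        push X a d = pull X c d' \<longrightarrow>
        (\<exists>b\<in>Hom X (tgt X x) (tgt X x'). cmp X b x = cmp X x' a \<and> cmp X y' b = cmp X c y)) \<and>
     \<comment> \<open>s(0) = [A -> A (+) C -> C]\<close>
     (\<forall>A\<in>Ob X. \<forall>C\<in>Ob X. \<forall>S i1 i2 p1 p2. is_biprod X A C S i1 i2 p1 p2 \<longrightarrow>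
        real X (ezero X C A) i1 p2) \<and>
     \<comment> \<open>s(delta (+) delta') = s(delta) (+) s(delta')\<close>
     (\<forall>d x y d' x' y' SA iA iA' pA pA' SC jC jC' qC qC' SB kB kB' rB rB' e.
        real X d x y \<and> real X d' x' y' \<and>
        is_biprod X (eA X d) (eA X d') SA iA iA' pA pA' \<and>
        is_biprod X (eC X d) (eC X d') SC jC jC' qC qC' \<and>
        is_biprod X (tgt X x) (tgt X x') SB kB kB' rB rB' \<and>
        e \<in> E X SC SA \<and>
        push X pA (pull X jC e) = d \<and> push X pA' (pull X jC' e) = d' \<and>
        push X pA (pull X jC' e) = ezero X (eC X d') (eA X d) \<and>
        push X pA' (pull X jC e) = ezero X (eC X d) (eA X d') \<longrightarrow>
        real X e (madd X (cmp X kB (cmp X x pA)) (cmp X kB' (cmp X x' pA')))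
                 (madd X (cmp X jC (cmp X y rB)) (cmp X jC' (cmp X y' rB'))))"

definition tri_morph :: "('o,'m,'e) etcat \<Rightarrow> 'e \<Rightarrow> 'm \<Rightarrow> 'm \<Rightarrow> 'e \<Rightarrow> 'm \<Rightarrow> 'm \<Rightarrow> 'm \<Rightarrow> 'm \<Rightarrow> 'm \<Rightarrow> bool" where
  "tri_morph X d x y d' x' y' a b c \<longleftrightarrow>
     a \<in> Hom X (src X x) (src X x') \<and> b \<in> Hom X (tgt X x) (tgt X x') \<and>
     c \<in> Hom X (tgt X y) (tgt X y') \<and>
     cmp X b x = cmp X x' a \<and> cmp X y' b = cmp X c y \<and> push X a d = pull X c d'"

definition ET3 :: "('o,'m,'e) etcat \<Rightarrow> bool" where
  "ET3 X \<longleftrightarrow> (\<forall>d x y d' x' y' a b. real X d x y \<and> real X d' x' y' \<and>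
      a \<in> Hom X (src X x) (src X x') \<and> b \<in> Hom X (tgt X x) (tgt X x') \<and>
      cmp X b x = cmp X x' a \<longrightarrow>
      (\<exists>c. tri_morph X d x y d' x' y' a b c))"

definition ET3op :: "('o,'m,'e) etcat \<Rightarrow> bool" where
  "ET3op X \<longleftrightarrow> (\<forall>d x y d' x' y' b c. real X d x y \<and> real X d' x' y' \<and>
      b \<in> Hom X (tgt X x) (tgt X x') \<and> c \<in> Hom X (tgt X y) (tgt X y') \<and>
      cmp X y' b = cmp X c y \<longrightarrow>
      (\<exists>a. tri_morph X d x y d' x' y' a b c))"

definition ET4 :: "('o,'m,'e) etcat \<Rightarrow> bool" where
  "ET4 X \<longleftrightarrow> (\<forall>d f f' d' g g'. real X d f f' \<and> real X d' g g' \<and> tgt X f = src X g \<longrightarrow>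
      (\<exists>h' dd e d''. real X d'' (cmp X g f) h' \<and>
          dd \<in> Hom X (tgt X f') (tgt X h') \<and> e \<in> Hom X (tgt X h') (tgt X g') \<and>
          cmp X dd f' = cmp X h' g \<and> cmp X e h' = g' \<and>
          real X (push X f' d') dd e \<and>
          pull X dd d'' = d \<and> push X f d'' = pull X e d'))"

definition ET4op :: "('o,'m,'e) etcat \<Rightarrow> bool" where
  "ET4op X \<longleftrightarrow> (\<forall>d f' f d' g' g. real X d f' f \<and> real X d' g' g \<and> tgt X f = tgt X g' \<longrightarrow>
      (\<exists>h' dd e d''. real X d'' h' (cmp X g f) \<and>
          dd \<in> Hom X (src X f') (src X h') \<and> e \<in> Hom X (src X h') (src X g') \<and>
          cmp X h' dd = f' \<and> cmp X f h' = cmp X g' e \<and>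
          real X (pull X g' d) dd e \<and>
          d' = push X e d'' \<and> push X dd d = pull X g d''))"

definition extriangulated :: "('o,'m,'e) etcat \<Rightarrow> bool" where
  "extriangulated X \<longleftrightarrow> additive_cat X \<and> biadditive_E X \<and> additive_realization X \<and>
     ET3 X \<and> ET3op X \<and> ET4 X \<and> ET4op X"

definition inj_obj :: "('o,'m,'e) etcat \<Rightarrow> 'o \<Rightarrow> bool" where
  "inj_obj X I \<longleftrightarrow> I \<in> Ob X \<and> (\<forall>C\<in>Ob X. \<forall>d\<in>E X C I. d = ezero X C I)"

definition enough_inj_obj :: "('o,'m,'e) etcat \<Rightarrow> bool" where
  "enough_inj_obj X \<longleftrightarrow> (\<forall>A\<in>Ob X. \<exists>d x y. real X d x y \<and> src X x = A \<and> inj_obj X (tgt X x))"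

definition enough_proj_mor :: "('o,'m,'e) etcat \<Rightarrow> bool" where
  "enough_proj_mor X \<longleftrightarrow> (\<forall>C\<in>Ob X. \<exists>g k p. real X g k p \<and> tgt X p = C \<and>
      (\<forall>A\<in>Ob X. \<forall>d\<in>E X C A. pull X p d = ezero X (src X p) A))"

definition ideal :: "('o,'m,'e) etcat \<Rightarrow> 'm set \<Rightarrow> bool" where
  "ideal X I \<longleftrightarrow> I \<subseteq> Mor X \<and>
     (\<forall>A\<in>Ob X. \<forall>B\<in>Ob X. mzero X A B \<in> I) \<and>
     (\<forall>f\<in>I. \<forall>g\<in>I. src X f = src X g \<and> tgt X f = tgt X g \<longrightarrow> madd X f g \<in> I) \<and>
     (\<forall>f\<in>I. \<forall>g\<in>Mor X. tgt X f = src X g \<longrightarrow> cmp X g f \<in> I) \<and>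
     (\<forall>f\<in>I. \<forall>g\<in>Mor X. tgt X g = src X f \<longrightarrow> cmp X f g \<in> I)"

definition additive_subfunctor :: "('o,'m,'e) etcat \<Rightarrow> 'e set \<Rightarrow> bool" where
  "additive_subfunctor X F \<longleftrightarrow> F \<subseteq> Ex X \<and>
     (\<forall>C\<in>Ob X. \<forall>A\<in>Ob X. ezero X C A \<in> F) \<and>
     (\<forall>d\<in>F. \<forall>d'\<in>F. eC X d = eC X d' \<and> eA X d = eA X d' \<longrightarrow> eadd X d d' \<in> F) \<and>
     (\<forall>d\<in>F. eneg X d \<in> F) \<and>
     (\<forall>d\<in>F. \<forall>c\<in>Mor X. tgt X c = eC X d \<longrightarrow> pull X c d \<in> F) \<and>
     (\<forall>d\<in>F. \<forall>a\<in>Mor X. src X a = eA X d \<longrightarrow> push X a d \<in> F)"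

definition Ph :: "('o,'m,'e) etcat \<Rightarrow> 'e set \<Rightarrow> 'm set" where
  "Ph X F = {f \<in> Mor X. \<forall>d\<in>Ex X. eC X d = tgt X f \<longrightarrow> pull X f d \<in> F}"

definition F_inj :: "('o,'m,'e) etcat \<Rightarrow> 'e set \<Rightarrow> 'm set" where
  "F_inj X F = {i \<in> Mor X. \<forall>d\<in>F. eA X d = src X i \<longrightarrow> push X i d = ezero X (eC X d) (tgt X i)}"

definition star :: "('o,'m,'e) etcat \<Rightarrow> 'm set \<Rightarrow> 'e set" where
  "star X I = {e. \<exists>i\<in>I. \<exists>d\<in>Ex X. eC X d = tgt X i \<and> e = pull X i d}"

definition enough_inj_mor :: "('o,'m,'e) etcat \<Rightarrow> 'e set \<Rightarrow> bool" where
  "enough_inj_mor X F \<longleftrightarrow> (\<forall>A\<in>Ob X. \<exists>d e y. d \<in> F \<and> real X d e y \<and> src X e = A \<and> e \<in> F_inj X F)"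

definition enough_special_inj_mor :: "('o,'m,'e) etcat \<Rightarrow> 'e set \<Rightarrow> bool" where
  "enough_special_inj_mor X F \<longleftrightarrow> (\<forall>A\<in>Ob X. \<exists>d e y. d \<in> F \<and> real X d e y \<and> src X e = A \<and>
      e \<in> F_inj X F \<and>
      (\<exists>d' x' y' b \<phi>. real X d' x' y' \<and> src X x' = A \<and>
          tri_morph X d e y d' x' y' (idm X A) b \<phi> \<and> \<phi> \<in> Ph X F))"

definition perpR :: "('o,'m,'e) etcat \<Rightarrow> 'm set \<Rightarrow> 'm set" where
  "perpR X M = {g \<in> Mor X. \<forall>m\<in>M. \<forall>d\<in>Ex X. eC X d = tgt X m \<and> eA X d = src X g \<longrightarrow>
      pull X m (push X g d) = ezero X (src X m) (tgt X g)}"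

definition perpL :: "('o,'m,'e) etcat \<Rightarrow> 'm set \<Rightarrow> 'm set" where
  "perpL X M = {g \<in> Mor X. \<forall>m\<in>M. \<forall>d\<in>Ex X. eC X d = tgt X g \<and> eA X d = src X m \<longrightarrow>
      pull X g (push X m d) = ezero X (src X g) (tgt X m)}"

definition cotorsion_pair :: "('o,'m,'e) etcat \<Rightarrow> 'm set \<Rightarrow> 'm set \<Rightarrow> bool" where
  "cotorsion_pair X I J \<longleftrightarrow> I = perpL X J \<and> J = perpR X I"

definition special_precovering :: "('o,'m,'e) etcat \<Rightarrow> 'm set \<Rightarrow> bool" where
  "special_precovering X I \<longleftrightarrow> (\<forall>C\<in>Ob X. \<exists>i\<in>I. tgt X i = C \<and>
     (\<exists>d x y d' x' j b. real X d x y \<and> real X d' x' i \<and> tgt X y = C \<and>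
        tri_morph X d x y d' x' i j b (idm X C) \<and> j \<in> perpR X I))"

definition special_preenveloping :: "('o,'m,'e) etcat \<Rightarrow> 'm set \<Rightarrow> bool" where
  "special_preenveloping X J \<longleftrightarrow> (\<forall>A\<in>Ob X. \<exists>e\<in>J. src X e = A \<and>
     (\<exists>d y d' x' y' b j. real X d e y \<and> real X d' x' y' \<and> src X x' = A \<and>
        tri_morph X d e y d' x' y' (idm X A) b j \<and> j \<in> perpL X J))"

definition complete_cotorsion_pair :: "('o,'m,'e) etcat \<Rightarrow> 'm set \<Rightarrow> 'm set \<Rightarrow> bool" where
  "complete_cotorsion_pair X I J \<longleftrightarrow> cotorsion_pair X I J \<and>
     special_precovering X I \<and> special_preenveloping X J"

definition propC :: "('o,'m,'e) etcat \<Rightarrow> 'm set \<Rightarrow> bool" where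
  "propC X K \<longleftrightarrow> (\<forall>g x y d x' y' a b c. real X g x y \<and> real X d x' y' \<and> inj_obj X (tgt X y) \<and>
      tri_morph X g x y d x' y' a b c \<and> a \<in> K \<longrightarrow> b \<in> K)"

end

theory Submission
  imports Defs
begin

text \<open>
  For an object C take an \<open>\<bbbE>\<close>-triangle
  K \<rightarrow> P \<rightarrow> C whose deflation is a projective morphism and push it out along an
  \<open>\<bbbF>\<close>-injective inflation of K. The new deflation \<open>\<phi>\<close> is a phantom: every extension of C is a
  pushout of the first triangle, and its pullback along \<open>\<phi>\<close> is a pullback of an \<open>\<bbbF>\<close>-triangle.
  The morphism of triangles so obtained is a special precover of C, and pulling an injective
  hull triangle of A back along \<open>\<phi>\<close> gives a special preenvelope of A; this proves (1) and shows
  that \<open>Ph(\<bbbF>)\<^sup>\<star>\<close> has enough special injective morphisms.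

  That \<open>Ph(\<bbbF>)\<^sup>\<perp>\<close> is the class of \<open>Ph(\<bbbF>)\<^sup>\<star>\<close>-injectives and satisfies (C) is formal. For
  minimality, let \<open>g \<in> Ph(\<bbbF>)\<^sup>\<perp>\<close> and let \<open>\<epsilon>\<close> be an injective hull triangle of its source: since
  \<open>\<phi>\<^sup>* g\<^sub>* \<epsilon> = 0\<close>, the extension \<open>g\<^sub>* \<epsilon>\<close> is a pushout of the precover extension along a
  multiple a of an \<open>\<bbbF>\<close>-injective, and (ET4)\<open>\<^sup>o\<^sup>p\<close> together with (C) then writes g as a member
  of K plus a morphism factoring through a. Maximality in (3) holds because a special injective
  morphism exhibits every extension of \<open>\<bbbF>'\<close> as a pullback along a phantom.
\<close>

section \<open>Abelian groups on carrier sets\<close>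

locale abelian_group_on =
  fixes S :: "'a set" and add :: "'a \<Rightarrow> 'a \<Rightarrow> 'a" and neg :: "'a \<Rightarrow> 'a" and zero :: 'a
  assumes add_closed: "x \<in> S \<Longrightarrow> y \<in> S \<Longrightarrow> add x y \<in> S"
    and neg_closed: "x \<in> S \<Longrightarrow> neg x \<in> S"
    and zero_closed: "zero \<in> S"
    and add_assoc: "x \<in> S \<Longrightarrow> y \<in> S \<Longrightarrow> w \<in> S \<Longrightarrow> add (add x y) w = add x (add y w)"
    and add_commute: "x \<in> S \<Longrightarrow> y \<in> S \<Longrightarrow> add x y = add y x"
    and add_zero_left: "x \<in> S \<Longrightarrow> add zero x = x"
    and add_neg_right: "x \<in> S \<Longrightarrow> add x (neg x) = zero"
begin

lemma add_zero_right: "x \<in> S \<Longrightarrow> add x zero = x"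
  using add_commute add_zero_left zero_closed by metis

lemma add_neg_left: "x \<in> S \<Longrightarrow> add (neg x) x = zero"
  using add_commute add_neg_right neg_closed by metis

lemma idem_eq_zero:
  assumes "x \<in> S" "add x x = x" shows "x = zero"
proof -
  have "zero = add (add x x) (neg x)" using add_neg_right assms by simp
  also have "\<dots> = x" using add_assoc add_neg_right add_zero_right neg_closed assms(1) by simp
  finally show ?thesis by simp
qed

lemma neg_unique:
  assumes "x \<in> S" "y \<in> S" "add x y = zero" shows "y = neg x"
proof -
  have "y = add (add (neg x) x) y" using add_neg_left add_zero_left assms by simp
  also have "\<dots> = neg x" using add_assoc add_zero_right neg_closed assms by simp
  finally show ?thesis .
qed

lemma eq_add_if_add_neg_eq:
  assumes "x \<in> S" "y \<in> S" "w \<in> S" "add y (neg x) = w" shows "y = add x w"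
proof -
  have "y = add y (add (neg x) x)" using add_neg_left add_zero_right assms by simp
  also have "\<dots> = add w x" using add_assoc[of y "neg x" x] assms neg_closed by simp
  finally show ?thesis using add_commute assms by simp
qed

lemma add_neg_cancel: "x \<in> S \<Longrightarrow> y \<in> S \<Longrightarrow> add (add y x) (neg x) = y"
  using add_assoc add_neg_right add_zero_right neg_closed by simp

lemma additive_map_zero_neg:
  assumes T: "abelian_group_on T add' neg' zero'"
    and f_closed: "\<And>x. x \<in> S \<Longrightarrow> f x \<in> T"
    and f_add: "\<And>x y. x \<in> S \<Longrightarrow> y \<in> S \<Longrightarrow> f (add x y) = add' (f x) (f y)"
  shows "f zero = zero'" and "x \<in> S \<Longrightarrow> f (neg x) = neg' (f x)"
proof -
  interpret T: abelian_group_on T add' neg' zero' by (rule T)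
  show fz: "f zero = zero'"
    using T.idem_eq_zero f_closed f_add[of zero zero] zero_closed add_zero_left by metis
  show "f (neg x) = neg' (f x)" if x: "x \<in> S"
    using T.neg_unique[OF f_closed[OF x] f_closed[OF neg_closed[OF x]]]
      f_add[OF x neg_closed[OF x]] add_neg_right[OF x] fz by simp
qed

end

lemma Hom_iff: "f \<in> Hom X A B \<longleftrightarrow> f \<in> Mor X \<and> src X f = A \<and> tgt X f = B"
  by (simp add: Hom_def)

lemma E_iff: "d \<in> E X C A \<longleftrightarrow> d \<in> etcat.Ex X \<and> eC X d = C \<and> eA X d = A"
  by (simp add: E_def)

definition E_orthogonal :: "('o,'m,'e) etcat \<Rightarrow> 'm \<Rightarrow> 'm \<Rightarrow> bool" where
  "E_orthogonal X f g \<longleftrightarrow>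
     (\<forall>d\<in>E X (tgt X f) (src X g). pull X f (push X g d) = ezero X (src X f) (tgt X g))"

lemma perpR_iff: "g \<in> perpR X M \<longleftrightarrow> g \<in> Mor X \<and> (\<forall>m\<in>M. E_orthogonal X m g)"
  unfolding perpR_def E_orthogonal_def by (auto simp: E_iff)

lemma perpL_iff: "g \<in> perpL X M \<longleftrightarrow> g \<in> Mor X \<and> (\<forall>m\<in>M. E_orthogonal X g m)"
  unfolding perpL_def E_orthogonal_def by (auto simp: E_iff)

lemma perpRI: "g \<in> Mor X \<Longrightarrow> (\<And>m d. m \<in> M \<Longrightarrow> d \<in> E X (tgt X m) (src X g) \<Longrightarrow>
    pull X m (push X g d) = ezero X (src X m) (tgt X g)) \<Longrightarrow> g \<in> perpR X M"
  by (simp add: perpR_iff E_orthogonal_def)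

lemma perpRD: "g \<in> perpR X M \<Longrightarrow> m \<in> M \<Longrightarrow> d \<in> E X (tgt X m) (src X g) \<Longrightarrow>
    pull X m (push X g d) = ezero X (src X m) (tgt X g)"
  by (simp add: perpR_iff E_orthogonal_def)

lemma perpLD: "g \<in> perpL X M \<Longrightarrow> m \<in> M \<Longrightarrow> d \<in> E X (tgt X g) (src X m) \<Longrightarrow>
    pull X g (push X m d) = ezero X (src X g) (tgt X m)"
  by (simp add: perpL_iff E_orthogonal_def)

lemma perpR_Mor: "g \<in> perpR X M \<Longrightarrow> g \<in> Mor X"
  and perpL_Mor: "g \<in> perpL X M \<Longrightarrow> g \<in> Mor X"
  by (simp_all add: perpR_iff perpL_iff)

lemma perpL_subset_Mor: "perpL X M \<subseteq> Mor X" unfolding perpL_def by blast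

lemma perpL_antimono: "M \<subseteq> N \<Longrightarrow> perpL X N \<subseteq> perpL X M"
  and perpR_antimono: "M \<subseteq> N \<Longrightarrow> perpR X N \<subseteq> perpR X M"
  unfolding perpL_def perpR_def by blast+

lemma subset_perpR_perpL: "M \<subseteq> Mor X \<Longrightarrow> M \<subseteq> perpR X (perpL X M)"
  and subset_perpL_perpR: "M \<subseteq> Mor X \<Longrightarrow> M \<subseteq> perpL X (perpR X M)"
  unfolding perpR_def perpL_def by blast+

lemma perpL_perpR_perpL: "M \<subseteq> Mor X \<Longrightarrow> perpL X (perpR X (perpL X M)) = perpL X M"
  using perpL_antimono subset_perpR_perpL subset_perpL_perpR perpL_Mor
  by (meson subset_antisym subset_iff)

lemma subfunctor_subset_Ex: "additive_subfunctor X G \<Longrightarrow> G \<subseteq> etcat.Ex X"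
  and subfunctor_ezero: "additive_subfunctor X G \<Longrightarrow> C \<in> Ob X \<Longrightarrow> A \<in> Ob X \<Longrightarrow> ezero X C A \<in> G"
  and subfunctor_eadd: "additive_subfunctor X G \<Longrightarrow> d \<in> G \<Longrightarrow> d' \<in> G \<Longrightarrow>
    d \<in> E X C A \<Longrightarrow> d' \<in> E X C A \<Longrightarrow> eadd X d d' \<in> G"
  and subfunctor_pull: "additive_subfunctor X G \<Longrightarrow> d \<in> G \<Longrightarrow> d \<in> E X C A \<Longrightarrow>
    c \<in> Hom X W C \<Longrightarrow> pull X c d \<in> G"
  and subfunctor_push: "additive_subfunctor X G \<Longrightarrow> d \<in> G \<Longrightarrow> d \<in> E X C A \<Longrightarrow>
    a \<in> Hom X A B \<Longrightarrow> push X a d \<in> G"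
  unfolding additive_subfunctor_def by (auto simp: E_iff Hom_iff)

lemma PhI: "f \<in> Mor X \<Longrightarrow> (\<And>d A. d \<in> E X (tgt X f) A \<Longrightarrow> pull X f d \<in> G) \<Longrightarrow> f \<in> Ph X G"
  and PhD: "f \<in> Ph X G \<Longrightarrow> d \<in> E X (tgt X f) A \<Longrightarrow> pull X f d \<in> G"
  and Ph_Mor: "f \<in> Ph X G \<Longrightarrow> f \<in> Mor X"
  unfolding Ph_def by (auto simp: E_iff)

lemma Ph_subset_Mor: "Ph X G \<subseteq> Mor X"
  and Ph_mono: "G \<subseteq> H \<Longrightarrow> Ph X G \<subseteq> Ph X H"
  unfolding Ph_def by blast+

lemma F_injD: "i \<in> F_inj X G \<Longrightarrow> d \<in> G \<Longrightarrow> eA X d = src X i \<Longrightarrow>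
    push X i d = ezero X (eC X d) (tgt X i)"
  and F_inj_Mor: "i \<in> F_inj X G \<Longrightarrow> i \<in> Mor X"
  unfolding F_inj_def by auto

lemma F_inj_subset_Mor: "F_inj X G \<subseteq> Mor X"
  unfolding F_inj_def by blast

lemma starI: "m \<in> M \<Longrightarrow> d \<in> E X (tgt X m) A \<Longrightarrow> pull X m d \<in> star X M"
  unfolding star_def by (auto simp: E_iff)

lemma ideal_subset_Mor: "ideal X K \<Longrightarrow> K \<subseteq> Mor X"
  and ideal_madd: "ideal X K \<Longrightarrow> f \<in> K \<Longrightarrow> g \<in> K \<Longrightarrow> f \<in> Hom X A B \<Longrightarrow> g \<in> Hom X A B \<Longrightarrow>
    madd X f g \<in> K"
  and ideal_cmp_right: "ideal X K \<Longrightarrow> f \<in> K \<Longrightarrow> f \<in> Hom X B C \<Longrightarrow> g \<in> Hom X A B \<Longrightarrow>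
    cmp X f g \<in> K"
  and ideal_cmp_left: "ideal X K \<Longrightarrow> f \<in> K \<Longrightarrow> f \<in> Hom X A B \<Longrightarrow> h \<in> Hom X B C \<Longrightarrow>
    cmp X h f \<in> K"
  unfolding ideal_def by (auto simp: Hom_iff)

section \<open>Calculus in an extriangulated category\<close>

locale extriangulated_category =
  fixes X :: "('o,'m,'e) etcat"
  assumes extriangulated: "extriangulated X"
begin

lemma additive: "additive_cat X"
  and biadditive: "biadditive_E X"
  and realization: "additive_realization X"
  using extriangulated unfolding extriangulated_def by blast+

lemma preadditive: "preadditive X" and category: "is_category X"
  using additive unfolding additive_cat_def preadditive_def by blast+

lemma Mor_Ob: "f \<in> Mor X \<Longrightarrow> src X f \<in> Ob X" "f \<in> Mor X \<Longrightarrow> tgt X f \<in> Ob X"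
  using category unfolding is_category_def by blast+

lemma Mor_Hom: "f \<in> Mor X \<Longrightarrow> f \<in> Hom X (src X f) (tgt X f)"
  by (simp add: Hom_iff)

lemma HomD: "f \<in> Hom X A B \<Longrightarrow> f \<in> Mor X" "f \<in> Hom X A B \<Longrightarrow> src X f = A"
  "f \<in> Hom X A B \<Longrightarrow> tgt X f = B"
  by (simp_all add: Hom_iff)

lemma Hom_Ob: "f \<in> Hom X A B \<Longrightarrow> A \<in> Ob X" "f \<in> Hom X A B \<Longrightarrow> B \<in> Ob X"
  using Mor_Ob by (auto simp: Hom_iff)

lemma idm_Hom: "A \<in> Ob X \<Longrightarrow> idm X A \<in> Hom X A A"
  using category unfolding is_category_def by blast

lemma cmp_Hom: "f \<in> Hom X A B \<Longrightarrow> g \<in> Hom X B C \<Longrightarrow> cmp X g f \<in> Hom X A C"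
  using category unfolding is_category_def by (auto simp: Hom_iff)

lemma cmp_Mor: "f \<in> Mor X \<Longrightarrow> g \<in> Mor X \<Longrightarrow> tgt X f = src X g \<Longrightarrow> cmp X g f \<in> Mor X"
  using category unfolding is_category_def by (auto simp: Hom_iff)

lemma cmp_assoc: "f \<in> Hom X A B \<Longrightarrow> g \<in> Hom X B C \<Longrightarrow> h \<in> Hom X C D \<Longrightarrow>
    cmp X h (cmp X g f) = cmp X (cmp X h g) f"
  using category unfolding is_category_def by (auto simp: Hom_iff)

lemma cmp_idm_left: "f \<in> Hom X A B \<Longrightarrow> cmp X (idm X B) f = f"
  and cmp_idm_right: "f \<in> Hom X A B \<Longrightarrow> cmp X f (idm X A) = f"
  using category unfolding is_category_def by (auto simp: Hom_iff)

lemma Hom_group: "A \<in> Ob X \<Longrightarrow> B \<in> Ob X \<Longrightarrow>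
    abelian_group_on (Hom X A B) (madd X) (mneg X) (mzero X A B)"
  using preadditive unfolding preadditive_def by unfold_locales blast+

lemma mzero_Hom: "A \<in> Ob X \<Longrightarrow> B \<in> Ob X \<Longrightarrow> mzero X A B \<in> Hom X A B"
  using abelian_group_on.zero_closed[OF Hom_group] .

lemma madd_Hom: "f \<in> Hom X A B \<Longrightarrow> g \<in> Hom X A B \<Longrightarrow> madd X f g \<in> Hom X A B"
  using abelian_group_on.add_closed[OF Hom_group[OF Hom_Ob]] .

lemma mneg_Hom: "f \<in> Hom X A B \<Longrightarrow> mneg X f \<in> Hom X A B"
  using abelian_group_on.neg_closed[OF Hom_group[OF Hom_Ob]] .

lemma preadditive_Hom:
  assumes "A \<in> Ob X" "B \<in> Ob X"
  shows "\<forall>f\<in>Hom X A B. \<forall>g\<in>Hom X A B. \<forall>h\<in>Mor X. src X h = B \<longrightarrow>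
      cmp X h (madd X f g) = madd X (cmp X h f) (cmp X h g)"
    and "\<forall>f\<in>Hom X A B. \<forall>g\<in>Hom X A B. \<forall>h\<in>Mor X. tgt X h = A \<longrightarrow>
      cmp X (madd X f g) h = madd X (cmp X f h) (cmp X g h)"
  using preadditive assms unfolding preadditive_def by blast+

lemma cmp_madd_left:
  assumes "f \<in> Hom X A B" "g \<in> Hom X A B" "h \<in> Hom X B C"
  shows "cmp X h (madd X f g) = madd X (cmp X h f) (cmp X h g)"
  using preadditive_Hom(1)[OF Hom_Ob(1)[OF assms(1)] Hom_Ob(2)[OF assms(1)]] assms
  by (auto simp: Hom_iff)

lemma cmp_madd_right:
  assumes "f \<in> Hom X A B" "g \<in> Hom X A B" "h \<in> Hom X C A"
  shows "cmp X (madd X f g) h = madd X (cmp X f h) (cmp X g h)"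
  using preadditive_Hom(2)[OF Hom_Ob(1)[OF assms(1)] Hom_Ob(2)[OF assms(1)]] assms
  by (auto simp: Hom_iff)

lemma
  assumes f: "f \<in> Hom X A B" and C: "C \<in> Ob X"
  shows cmp_mzero_left: "cmp X (mzero X B C) f = mzero X A C"
    and cmp_mneg_left: "g \<in> Hom X B C \<Longrightarrow> cmp X (mneg X g) f = mneg X (cmp X g f)"
proof -
  have A: "A \<in> Ob X" and B: "B \<in> Ob X" using Hom_Ob f by blast+
  note additive_map = abelian_group_on.additive_map_zero_neg[OF Hom_group[OF B C] Hom_group[OF A C],
      where f="\<lambda>g. cmp X g f", OF cmp_Hom[OF f] cmp_madd_right[OF _ _ f]]
  show "cmp X (mzero X B C) f = mzero X A C" by (rule additive_map(1))
  show "g \<in> Hom X B C \<Longrightarrow> cmp X (mneg X g) f = mneg X (cmp X g f)" by (rule additive_map(2))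
qed

lemma cmp_mzero_right:
  assumes g: "g \<in> Hom X B C" and A: "A \<in> Ob X"
  shows "cmp X g (mzero X A B) = mzero X A C"
proof -
  have B: "B \<in> Ob X" and C: "C \<in> Ob X" using Hom_Ob g by blast+
  show ?thesis
    by (rule abelian_group_on.additive_map_zero_neg(1)[OF Hom_group[OF A B] Hom_group[OF A C],
        where f="cmp X g", OF cmp_Hom[OF _ g] cmp_madd_left[OF _ _ g]])
qed

lemma E_Ob: "d \<in> E X C A \<Longrightarrow> C \<in> Ob X" "d \<in> E X C A \<Longrightarrow> A \<in> Ob X"
  using biadditive unfolding biadditive_E_def by (auto simp: E_iff)

lemma E_Ex: "d \<in> E X C A \<Longrightarrow> d \<in> etcat.Ex X"
  by (simp add: E_iff)

lemma E_group:
  assumes "C \<in> Ob X" "A \<in> Ob X"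
  shows "abelian_group_on (E X C A) (eadd X) (eneg X) (ezero X C A)"
  using biadditive unfolding biadditive_E_def
  by (elim conjE) (unfold_locales; use assms in blast)

lemma ezero_E: "C \<in> Ob X \<Longrightarrow> A \<in> Ob X \<Longrightarrow> ezero X C A \<in> E X C A"
  using abelian_group_on.zero_closed[OF E_group] .

lemma eadd_E: "d \<in> E X C A \<Longrightarrow> d' \<in> E X C A \<Longrightarrow> eadd X d d' \<in> E X C A"
  using abelian_group_on.add_closed[OF E_group[OF E_Ob]] .

lemma eneg_E: "d \<in> E X C A \<Longrightarrow> eneg X d \<in> E X C A"
  using abelian_group_on.neg_closed[OF E_group[OF E_Ob]] .

lemma pull_E: "d \<in> E X C A \<Longrightarrow> c \<in> Hom X W C \<Longrightarrow> pull X c d \<in> E X W A"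
  and push_E: "d \<in> E X C A \<Longrightarrow> a \<in> Hom X A B \<Longrightarrow> push X a d \<in> E X C B"
  and pull_idm: "d \<in> E X C A \<Longrightarrow> pull X (idm X C) d = d"
  and push_idm: "d \<in> E X C A \<Longrightarrow> push X (idm X A) d = d"
  and pull_cmp: "d \<in> E X C A \<Longrightarrow> c \<in> Hom X W C \<Longrightarrow> c' \<in> Hom X V W \<Longrightarrow>
    pull X (cmp X c c') d = pull X c' (pull X c d)"
  and push_cmp: "d \<in> E X C A \<Longrightarrow> a \<in> Hom X A B \<Longrightarrow> a' \<in> Hom X B B' \<Longrightarrow>
    push X (cmp X a' a) d = push X a' (push X a d)"
  and push_pull: "d \<in> E X C A \<Longrightarrow> a \<in> Hom X A B \<Longrightarrow> c \<in> Hom X W C \<Longrightarrow>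
    push X a (pull X c d) = pull X c (push X a d)"
  and pull_eadd: "d \<in> E X C A \<Longrightarrow> d' \<in> E X C A \<Longrightarrow> c \<in> Hom X W C \<Longrightarrow>
    pull X c (eadd X d d') = eadd X (pull X c d) (pull X c d')"
  and push_eadd: "d \<in> E X C A \<Longrightarrow> d' \<in> E X C A \<Longrightarrow> a \<in> Hom X A B \<Longrightarrow>
    push X a (eadd X d d') = eadd X (push X a d) (push X a d')"
  and pull_madd: "d \<in> E X C A \<Longrightarrow> c \<in> Hom X W C \<Longrightarrow> c' \<in> Hom X W C \<Longrightarrow>
    pull X (madd X c c') d = eadd X (pull X c d) (pull X c' d)"
  and push_madd: "d \<in> E X C A \<Longrightarrow> a \<in> Hom X A B \<Longrightarrow> a' \<in> Hom X A B \<Longrightarrow>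
    push X (madd X a a') d = eadd X (push X a d) (push X a' d)"
  using biadditive unfolding biadditive_E_def by (auto simp: E_iff Hom_iff)

lemma pull_ezero:
  assumes c: "c \<in> Hom X W C" and A: "A \<in> Ob X"
  shows "pull X c (ezero X C A) = ezero X W A"
  by (rule abelian_group_on.additive_map_zero_neg(1)[OF E_group[OF Hom_Ob(2)[OF c] A]
        E_group[OF Hom_Ob(1)[OF c] A], where f="pull X c", OF pull_E[OF _ c] pull_eadd[OF _ _ c]])

lemma push_ezero:
  assumes a: "a \<in> Hom X A B" and C: "C \<in> Ob X"
  shows "push X a (ezero X C A) = ezero X C B"
  by (rule abelian_group_on.additive_map_zero_neg(1)[OF E_group[OF C Hom_Ob(1)[OF a]]
        E_group[OF C Hom_Ob(2)[OF a]], where f="push X a", OF push_E[OF _ a] push_eadd[OF _ _ a]])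

lemma pull_mzero:
  assumes d: "d \<in> E X C A" and W: "W \<in> Ob X"
  shows "pull X (mzero X W C) d = ezero X W A"
  by (rule abelian_group_on.additive_map_zero_neg(1)[OF Hom_group[OF W E_Ob(1)[OF d]]
        E_group[OF W E_Ob(2)[OF d]], where f="\<lambda>c. pull X c d", OF pull_E[OF d] pull_madd[OF d]])

lemma push_mzero:
  assumes d: "d \<in> E X C A" and B: "B \<in> Ob X"
  shows "push X (mzero X A B) d = ezero X C B"
  by (rule abelian_group_on.additive_map_zero_neg(1)[OF Hom_group[OF E_Ob(2)[OF d] B]
        E_group[OF E_Ob(1)[OF d] B], where f="\<lambda>a. push X a d", OF push_E[OF d] push_madd[OF d]])

lemma pull_eneg:
  assumes d: "d \<in> E X C A" and c: "c \<in> Hom X W C"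
  shows "pull X c (eneg X d) = eneg X (pull X c d)"
  by (rule abelian_group_on.additive_map_zero_neg(2)[OF E_group[OF Hom_Ob(2)[OF c] E_Ob(2)[OF d]]
        E_group[OF Hom_Ob(1)[OF c] E_Ob(2)[OF d]], where f="pull X c",
        OF pull_E[OF _ c] pull_eadd[OF _ _ c] d])

lemma push_mneg:
  assumes d: "d \<in> E X C A" and a: "a \<in> Hom X A B"
  shows "push X (mneg X a) d = eneg X (push X a d)"
  by (rule abelian_group_on.additive_map_zero_neg(2)
        [OF Hom_group[OF Hom_Ob(1)[OF a] Hom_Ob(2)[OF a]]
        E_group[OF E_Ob(1)[OF d] Hom_Ob(2)[OF a]], where f="\<lambda>a. push X a d",
        OF push_E[OF d] push_madd[OF d] a])

lemma real_D: "real X d x y \<Longrightarrow> d \<in> etcat.Ex X \<and> x \<in> Mor X \<and> y \<in> Mor X \<and>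
    src X x = eA X d \<and> tgt X x = src X y \<and> tgt X y = eC X d"
  by (insert realization, unfold additive_realization_def, elim conjE, blast)

lemma real_exists: "d \<in> etcat.Ex X \<Longrightarrow> \<exists>x y. real X d x y"
  by (insert realization, unfold additive_realization_def, elim conjE, blast)

lemma realization_lift:
  "real X d x y \<Longrightarrow> real X d' x' y' \<Longrightarrow>
    a \<in> Hom X (eA X d) (eA X d') \<Longrightarrow> c \<in> Hom X (eC X d) (eC X d') \<Longrightarrow>
    push X a d = pull X c d' \<Longrightarrow>
    \<exists>b\<in>Hom X (tgt X x) (tgt X x'). cmp X b x = cmp X x' a \<and> cmp X y' b = cmp X c y"
  by (insert realization, unfold additive_realization_def, elim conjE, blast)

lemma real_ezero_biprod:
  assumes "A \<in> Ob X" "C \<in> Ob X" "is_biprod X A C S i1 i2 p1 p2"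
  shows "real X (ezero X C A) i1 p2"
proof -
  have "\<forall>A\<in>Ob X. \<forall>C\<in>Ob X. \<forall>S i1 i2 p1 p2. is_biprod X A C S i1 i2 p1 p2 \<longrightarrow>
      real X (ezero X C A) i1 p2"
    using realization unfolding additive_realization_def by (elim conjE)
  then show ?thesis using assms by blast
qed

lemma ET3_rule:
  "real X d x y \<Longrightarrow> real X d' x' y' \<Longrightarrow>
    a \<in> Hom X (src X x) (src X x') \<Longrightarrow> b \<in> Hom X (tgt X x) (tgt X x') \<Longrightarrow>
    cmp X b x = cmp X x' a \<Longrightarrow> \<exists>c. tri_morph X d x y d' x' y' a b c"
  using extriangulated unfolding extriangulated_def ET3_def by blast

lemma ET3op_rule:
  "real X d x y \<Longrightarrow> real X d' x' y' \<Longrightarrow>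
    b \<in> Hom X (tgt X x) (tgt X x') \<Longrightarrow> c \<in> Hom X (tgt X y) (tgt X y') \<Longrightarrow>
    cmp X y' b = cmp X c y \<Longrightarrow> \<exists>a. tri_morph X d x y d' x' y' a b c"
  using extriangulated unfolding extriangulated_def ET3op_def by blast

lemma ET4_rule:
  "real X d f f' \<Longrightarrow> real X d' g g' \<Longrightarrow> tgt X f = src X g \<Longrightarrow>
    \<exists>h' dd e d''. real X d'' (cmp X g f) h' \<and>
      dd \<in> Hom X (tgt X f') (tgt X h') \<and> e \<in> Hom X (tgt X h') (tgt X g') \<and>
      cmp X dd f' = cmp X h' g \<and> cmp X e h' = g' \<and> real X (push X f' d') dd e \<and>
      pull X dd d'' = d \<and> push X f d'' = pull X e d'"
  using extriangulated unfolding extriangulated_def ET4_def by blast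

lemma ET4op_rule:
  "real X d f' f \<Longrightarrow> real X d' g' g \<Longrightarrow> tgt X f = tgt X g' \<Longrightarrow>
    \<exists>h' dd e d''. real X d'' h' (cmp X g f) \<and>
      dd \<in> Hom X (src X f') (src X h') \<and> e \<in> Hom X (src X h') (src X g') \<and>
      cmp X h' dd = f' \<and> cmp X f h' = cmp X g' e \<and> real X (pull X g' d) dd e \<and>
      d' = push X e d'' \<and> push X dd d = pull X g d''"
  using extriangulated unfolding extriangulated_def ET4op_def by blast

lemma real_E: "real X d x y \<Longrightarrow> d \<in> E X (tgt X y) (src X x)"
  and real_eA: "real X d x y \<Longrightarrow> eA X d = src X x"
  and real_eC: "real X d x y \<Longrightarrow> eC X d = tgt X y"
  and real_mid: "real X d x y \<Longrightarrow> tgt X x = src X y"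
  and real_inflation_Hom: "real X d x y \<Longrightarrow> x \<in> Hom X (src X x) (src X y)"
  and real_deflation_Hom: "real X d x y \<Longrightarrow> y \<in> Hom X (tgt X x) (tgt X y)"
  using real_D by (simp_all add: E_iff Hom_iff)

lemma real_Hom: "real X d x y \<Longrightarrow> d \<in> E X C A \<Longrightarrow> x \<in> Hom X A (tgt X x) \<and> y \<in> Hom X (tgt X x) C"
  using real_D by (simp add: Hom_iff E_iff)

lemma tri_morphD:
  "tri_morph X d x y d' x' y' a b c \<Longrightarrow>
    a \<in> Hom X (src X x) (src X x') \<and> b \<in> Hom X (tgt X x) (tgt X x') \<and>
    c \<in> Hom X (tgt X y) (tgt X y') \<and>
    cmp X b x = cmp X x' a \<and> cmp X y' b = cmp X c y \<and> push X a d = pull X c d'"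
  unfolding tri_morph_def by blast

lemma biprod_exists: "A \<in> Ob X \<Longrightarrow> B \<in> Ob X \<Longrightarrow> \<exists>S i1 i2 p1 p2. is_biprod X A B S i1 i2 p1 p2"
  using additive unfolding additive_cat_def by blast

lemma zero_obj_exists: "\<exists>Z. zero_obj X Z"
  using additive unfolding additive_cat_def by blast

lemma zero_obj_Ob: "zero_obj X Z \<Longrightarrow> Z \<in> Ob X"
  unfolding zero_obj_def by blast

lemma zero_obj_from_unique:
  assumes Z: "zero_obj X Z" and f: "f \<in> Hom X Z B"
  shows "f = mzero X Z B"
proof -
  have B: "B \<in> Ob X" using f Hom_Ob by blast
  then have "\<exists>!f. f \<in> Hom X Z B" using Z unfolding zero_obj_def by blast
  then show ?thesis using f mzero_Hom[OF zero_obj_Ob[OF Z] B] by blast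
qed

lemma real_idm_to_zero:
  assumes Z: "zero_obj X Z" and A: "A \<in> Ob X"
  shows "real X (ezero X Z A) (idm X A) (mzero X A Z)"
proof -
  have Zo: "Z \<in> Ob X" using zero_obj_Ob Z .
  interpret H: abelian_group_on "Hom X A A" "madd X" "mneg X" "mzero X A A" using Hom_group A A .
  have "is_biprod X A Z A (idm X A) (mzero X Z A) (idm X A) (mzero X A Z)"
    unfolding is_biprod_def
  proof (intro conjI)
    show "cmp X (mzero X A Z) (mzero X Z A) = idm X Z"
      using zero_obj_from_unique[OF Z cmp_Hom[OF mzero_Hom[OF Zo A] mzero_Hom[OF A Zo]]]
        zero_obj_from_unique[OF Z idm_Hom[OF Zo]] by simp
    show "madd X (cmp X (idm X A) (idm X A)) (cmp X (mzero X Z A) (mzero X A Z)) = idm X A"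
      using cmp_idm_left[OF idm_Hom[OF A]] cmp_mzero_left[OF mzero_Hom[OF A Zo] A]
        H.add_zero_right idm_Hom[OF A] by simp
  qed (use A Zo idm_Hom mzero_Hom cmp_idm_left[OF idm_Hom[OF A]] cmp_mzero_left cmp_mzero_right
      in auto)
  then show ?thesis using real_ezero_biprod[OF A Zo] by blast
qed

lemma real_idm_from_zero:
  assumes Z: "zero_obj X Z" and B: "B \<in> Ob X"
  shows "real X (ezero X B Z) (mzero X Z B) (idm X B)"
proof -
  have Zo: "Z \<in> Ob X" using zero_obj_Ob Z .
  interpret H: abelian_group_on "Hom X B B" "madd X" "mneg X" "mzero X B B" using Hom_group B B .
  have "is_biprod X Z B B (mzero X Z B) (idm X B) (mzero X B Z) (idm X B)"
    unfolding is_biprod_def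
  proof (intro conjI)
    show "cmp X (mzero X B Z) (mzero X Z B) = idm X Z"
      using zero_obj_from_unique[OF Z cmp_Hom[OF mzero_Hom[OF Zo B] mzero_Hom[OF B Zo]]]
        zero_obj_from_unique[OF Z idm_Hom[OF Zo]] by simp
    show "madd X (cmp X (mzero X Z B) (mzero X B Z)) (cmp X (idm X B) (idm X B)) = idm X B"
      using cmp_idm_left[OF idm_Hom[OF B]] cmp_mzero_left[OF mzero_Hom[OF B Zo] B]
        H.add_zero_left idm_Hom[OF B] by simp
  qed (use B Zo idm_Hom mzero_Hom cmp_idm_left[OF idm_Hom[OF B]] cmp_mzero_left cmp_mzero_right
      in auto)
  then show ?thesis using real_ezero_biprod[OF Zo B] by blast
qed

subsection \<open>Exact sequences of an \<open>\<bbbE>\<close>-triangle\<close>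

lemma push_inflation_eq_zero:
  assumes r: "real X d x y"
  shows "push X x d = ezero X (eC X d) (tgt X x)"
proof -
  obtain Z where Z: "zero_obj X Z" using zero_obj_exists by blast
  have Zo: "Z \<in> Ob X" using zero_obj_Ob Z .
  define B where "B = tgt X x"
  define C where "C = eC X d"
  have x: "x \<in> Hom X (src X x) B" and y: "y \<in> Hom X B C"
    using real_inflation_Hom[OF r] real_deflation_Hom[OF r] real_mid[OF r] real_eC[OF r]
    unfolding B_def C_def by auto
  have Bo: "B \<in> Ob X" "C \<in> Ob X" using Hom_Ob y by auto
  have s: "real X (ezero X Z B) (idm X B) (mzero X B Z)" using real_idm_to_zero[OF Z Bo(1)] .
  have "\<exists>a. tri_morph X d x y (ezero X Z B) (idm X B) (mzero X B Z) a (idm X B) (mzero X C Z)"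
  proof (rule ET3op_rule[OF r s])
    show "idm X B \<in> Hom X (tgt X x) (tgt X (idm X B))"
      using idm_Hom[OF Bo(1)] HomD(3) B_def by metis
    show "mzero X C Z \<in> Hom X (tgt X y) (tgt X (mzero X B Z))"
      using mzero_Hom[OF Bo(2) Zo] mzero_Hom[OF Bo(1) Zo] HomD(3) y by metis
    show "cmp X (mzero X B Z) (idm X B) = cmp X (mzero X C Z) y"
      using cmp_idm_right[OF mzero_Hom[OF Bo(1) Zo]] cmp_mzero_left[OF y Zo] by simp
  qed
  then obtain a
    where t: "tri_morph X d x y (ezero X Z B) (idm X B) (mzero X B Z) a (idm X B) (mzero X C Z)"
    by blast
  note T = tri_morphD[OF t]
  have a: "a \<in> Hom X (src X x) B" using T idm_Hom[OF Bo(1)] HomD(2) by metis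
  have "x = a" using T cmp_idm_left[OF x] cmp_idm_left[OF a] by metis
  then show ?thesis using T pull_ezero[OF mzero_Hom[OF Bo(2) Zo] Bo(1)] B_def C_def by simp
qed

lemma pull_deflation_eq_zero:
  assumes r: "real X d x y"
  shows "pull X y d = ezero X (src X y) (eA X d)"
proof -
  obtain Z where Z: "zero_obj X Z" using zero_obj_exists by blast
  have Zo: "Z \<in> Ob X" using zero_obj_Ob Z .
  define B where "B = tgt X x"
  define A where "A = eA X d"
  have x: "x \<in> Hom X A B" and y: "y \<in> Hom X B (tgt X y)"
    using real_inflation_Hom[OF r] real_deflation_Hom[OF r] real_mid[OF r] real_eA[OF r]
    unfolding B_def A_def by auto
  have Bo: "B \<in> Ob X" "A \<in> Ob X" using Hom_Ob x by auto
  have s: "real X (ezero X B Z) (mzero X Z B) (idm X B)" using real_idm_from_zero[OF Z Bo(1)] .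
  have "\<exists>c. tri_morph X (ezero X B Z) (mzero X Z B) (idm X B) d x y (mzero X Z A) (idm X B) c"
  proof (rule ET3_rule[OF s r])
    show "mzero X Z A \<in> Hom X (src X (mzero X Z B)) (src X x)"
      using mzero_Hom[OF Zo Bo(1)] mzero_Hom[OF Zo Bo(2)] HomD(2) x by metis
    show "idm X B \<in> Hom X (tgt X (mzero X Z B)) (tgt X x)"
      using mzero_Hom[OF Zo Bo(1)] idm_Hom[OF Bo(1)] HomD(3) x by metis
    show "cmp X (idm X B) (mzero X Z B) = cmp X x (mzero X Z A)"
      using cmp_idm_left[OF mzero_Hom[OF Zo Bo(1)]] cmp_mzero_right[OF x Zo] by simp
  qed
  then obtain c
    where t: "tri_morph X (ezero X B Z) (mzero X Z B) (idm X B) d x y (mzero X Z A) (idm X B) c"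
    by blast
  note T = tri_morphD[OF t]
  have c: "c \<in> Hom X B (tgt X y)" using T idm_Hom[OF Bo(1)] HomD(3) by metis
  have "y = c" using T cmp_idm_right[OF y] cmp_idm_right[OF c] by metis
  moreover have "src X y = B" using y HomD(2) by metis
  ultimately show ?thesis using T push_ezero[OF mzero_Hom[OF Zo Bo(2)] Bo(1)] A_def by simp
qed

lemma deflation_cmp_inflation:
  assumes r: "real X d x y"
  shows "cmp X y x = mzero X (src X x) (tgt X y)"
proof -
  obtain Z where Z: "zero_obj X Z" using zero_obj_exists by blast
  have Zo: "Z \<in> Ob X" using zero_obj_Ob Z .
  define A where "A = src X x"
  have x: "x \<in> Hom X A (tgt X x)" and y: "y \<in> Hom X (tgt X x) (tgt X y)"
    using real_inflation_Hom[OF r] real_deflation_Hom[OF r] real_mid[OF r] unfolding A_def by auto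
  have Ao: "A \<in> Ob X" "tgt X y \<in> Ob X" using Hom_Ob x y by auto
  have s: "real X (ezero X Z A) (idm X A) (mzero X A Z)" using real_idm_to_zero[OF Z Ao(1)] .
  have "\<exists>c. tri_morph X (ezero X Z A) (idm X A) (mzero X A Z) d x y (idm X A) x c"
  proof (rule ET3_rule[OF s r])
    show "idm X A \<in> Hom X (src X (idm X A)) (src X x)"
      using idm_Hom[OF Ao(1)] HomD(2) A_def by metis
    show "x \<in> Hom X (tgt X (idm X A)) (tgt X x)" using idm_Hom[OF Ao(1)] HomD(3) x by metis
  qed (rule refl)
  then obtain c where t: "tri_morph X (ezero X Z A) (idm X A) (mzero X A Z) d x y (idm X A) x c"
    by blast
  note T = tri_morphD[OF t]
  have c: "c \<in> Hom X Z (tgt X y)" using T mzero_Hom[OF Ao(1) Zo] HomD(3) by metis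
  have "cmp X y x = cmp X c (mzero X A Z)" using T cmp_idm_right[OF x] by simp
  then show ?thesis using cmp_mzero_right[OF c Ao(1)] A_def by simp
qed

lemma exact_cmp_inflation:
  assumes r: "real X d x y" and d: "d \<in> E X C A" and e: "e \<in> Hom X A B"
    and z: "push X e d = ezero X C B"
  shows "\<exists>e'\<in>Hom X (tgt X x) B. cmp X e' x = e"
proof -
  obtain Z where Z: "zero_obj X Z" using zero_obj_exists by blast
  have Zo: "Z \<in> Ob X" using zero_obj_Ob Z .
  have Bo: "B \<in> Ob X" "C \<in> Ob X" using Hom_Ob e E_Ob d by auto
  have s: "real X (ezero X Z B) (idm X B) (mzero X B Z)" using real_idm_to_zero[OF Z Bo(1)] .
  have eZ: "eA X (ezero X Z B) = B" "eC X (ezero X Z B) = Z"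
    using ezero_E[OF Zo Bo(1)] by (auto simp: E_iff)
  have "\<exists>b\<in>Hom X (tgt X x) (tgt X (idm X B)). cmp X b x = cmp X (idm X B) e \<and>
      cmp X (mzero X B Z) b = cmp X (mzero X C Z) y"
  proof (rule realization_lift[OF r s])
    show "e \<in> Hom X (eA X d) (eA X (ezero X Z B))" using e d eZ by (simp add: E_iff)
    show "mzero X C Z \<in> Hom X (eC X d) (eC X (ezero X Z B))"
      using mzero_Hom[OF Bo(2) Zo] d eZ by (simp add: E_iff)
    show "push X e d = pull X (mzero X C Z) (ezero X Z B)"
      using z pull_ezero[OF mzero_Hom[OF Bo(2) Zo] Bo(1)] by simp
  qed
  then obtain b where "b \<in> Hom X (tgt X x) (tgt X (idm X B))" "cmp X b x = cmp X (idm X B) e"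
    by blast
  then show ?thesis using cmp_idm_left[OF e] HomD(3)[OF idm_Hom[OF Bo(1)]] by auto
qed

lemma exact_cmp_deflation:
  assumes r: "real X d x y" and d: "d \<in> E X C A" and c: "c \<in> Hom X W C"
    and z: "pull X c d = ezero X W A"
  shows "\<exists>c'\<in>Hom X W (tgt X x). cmp X y c' = c"
proof -
  obtain Z where Z: "zero_obj X Z" using zero_obj_exists by blast
  have Zo: "Z \<in> Ob X" using zero_obj_Ob Z .
  have Wo: "W \<in> Ob X" "A \<in> Ob X" using Hom_Ob c E_Ob d by auto
  have s: "real X (ezero X W Z) (mzero X Z W) (idm X W)" using real_idm_from_zero[OF Z Wo(1)] .
  have eZ: "eA X (ezero X W Z) = Z" "eC X (ezero X W Z) = W"
    using ezero_E[OF Wo(1) Zo] by (auto simp: E_iff)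
  have "\<exists>b\<in>Hom X (tgt X (mzero X Z W)) (tgt X x).
      cmp X b (mzero X Z W) = cmp X x (mzero X Z A) \<and> cmp X y b = cmp X c (idm X W)"
  proof (rule realization_lift[OF s r])
    show "mzero X Z A \<in> Hom X (eA X (ezero X W Z)) (eA X d)"
      using mzero_Hom[OF Zo Wo(2)] d eZ by (simp add: E_iff)
    show "c \<in> Hom X (eC X (ezero X W Z)) (eC X d)" using c d eZ by (simp add: E_iff)
    show "push X (mzero X Z A) (ezero X W Z) = pull X c d"
      using z push_ezero[OF mzero_Hom[OF Zo Wo(2)] Wo(1)] by simp
  qed
  then obtain b where "b \<in> Hom X (tgt X (mzero X Z W)) (tgt X x)" "cmp X y b = cmp X c (idm X W)"
    by blast
  then show ?thesis using cmp_idm_right[OF c] HomD(3)[OF mzero_Hom[OF Zo Wo(1)]] by auto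
qed

lemma exact_push_inflation:
  assumes r: "real X eta e f" and eta: "eta \<in> E X C A"
    and eps: "eps \<in> E X W A" and z: "push X e eps = ezero X W (tgt X e)"
  shows "\<exists>c\<in>Hom X W C. eps = pull X c eta"
proof -
  obtain x y where rx: "real X eps x y" using real_exists E_Ex[OF eps] by blast
  have e: "e \<in> Hom X A (tgt X e)" using real_Hom[OF r eta] by blast
  obtain e' where e': "e' \<in> Hom X (tgt X x) (tgt X e)" "cmp X e' x = e"
    using exact_cmp_inflation[OF rx eps e z] by blast
  have sx: "src X x = A" "src X e = A"
    using real_eA[OF rx] real_eA[OF r] eps eta by (auto simp: E_iff)
  have Ao: "A \<in> Ob X" using E_Ob eps by auto
  have "\<exists>c. tri_morph X eps x y eta e f (idm X A) e' c"
  proof (rule ET3_rule[OF rx r])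
    show "idm X A \<in> Hom X (src X x) (src X e)" using sx idm_Hom[OF Ao] by simp
    show "e' \<in> Hom X (tgt X x) (tgt X e)" using e' by simp
    show "cmp X e' x = cmp X e (idm X A)" using e'(2) cmp_idm_right[OF e] by simp
  qed
  then obtain c where t: "tri_morph X eps x y eta e f (idm X A) e' c" by blast
  note T = tri_morphD[OF t]
  have "tgt X y = W" "tgt X f = C" using real_eC[OF rx] real_eC[OF r] eps eta by (auto simp: E_iff)
  then show ?thesis using T push_idm[OF eps] by auto
qed

lemma exact_pull_deflation:
  assumes r: "real X gam k p" and gam: "gam \<in> E X C K"
    and del: "del \<in> E X C A" and z: "pull X p del = ezero X (src X p) A"
  shows "\<exists>h\<in>Hom X K A. del = push X h gam"
proof -
  obtain x y where rx: "real X del x y" using real_exists E_Ex[OF del] by blast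
  have p: "p \<in> Hom X (src X p) C" using real_Hom[OF r gam] real_mid[OF r] by metis
  obtain p' where p': "p' \<in> Hom X (src X p) (tgt X x)" "cmp X y p' = p"
    using exact_cmp_deflation[OF rx del p z] by blast
  have Co: "C \<in> Ob X" using E_Ob del by auto
  have ty: "tgt X y = C" "tgt X p = C"
    using real_eC[OF rx] real_eC[OF r] del gam by (auto simp: E_iff)
  have "\<exists>a. tri_morph X gam k p del x y a p' (idm X C)"
  proof (rule ET3op_rule[OF r rx])
    show "p' \<in> Hom X (tgt X k) (tgt X x)" using p' real_mid[OF r] by simp
    show "idm X C \<in> Hom X (tgt X p) (tgt X y)" using ty idm_Hom[OF Co] by simp
    show "cmp X y p' = cmp X (idm X C) p" using p'(2) cmp_idm_left[OF p] by simp
  qed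
  then obtain a where t: "tri_morph X gam k p del x y a p' (idm X C)" by blast
  note T = tri_morphD[OF t]
  have "src X k = K" "src X x = A" using real_eA[OF rx] real_eA[OF r] del gam by (auto simp: E_iff)
  then show ?thesis using T pull_idm[OF del] by auto
qed

lemma pull_of_injective_triangle:
  assumes I: "inj_obj X (tgt X x)" and r: "real X eps x y" and eps: "eps \<in> E X C A"
    and del: "del \<in> E X W A"
  shows "\<exists>c\<in>Hom X W C. del = pull X c eps"
proof (rule exact_push_inflation[OF r eps del])
  have x: "x \<in> Hom X A (tgt X x)" using real_Hom[OF r eps] by blast
  show "push X x del = ezero X W (tgt X x)"
    using push_E[OF del x] I E_Ob[OF del] unfolding inj_obj_def by blast
qed

lemma push_of_injective_triangle:
  assumes r: "real X eps x y" and eps: "eps \<in> E X I0 A" and I: "inj_obj X I0"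
    and del: "del \<in> E X C (tgt X x)"
  shows "\<exists>eps'\<in>E X C A. del = push X x eps'"
proof -
  obtain f g where r2: "real X del f g" using real_exists E_Ex[OF del] by blast
  have m: "tgt X x = src X f" using real_eA[OF r2] del by (simp add: E_iff)
  obtain h' s e d'' where H: "real X d'' (cmp X f x) h'"
    "s \<in> Hom X (tgt X y) (tgt X h')" "e \<in> Hom X (tgt X h') (tgt X g)"
    "real X (push X y del) s e" "push X x d'' = pull X e del"
    using ET4_rule[OF r r2 m] by blast
  have x: "x \<in> Hom X A (tgt X x)" and y: "y \<in> Hom X (tgt X x) I0" using real_Hom[OF r eps] by auto
  have tg: "tgt X g = C" using real_eC[OF r2] del by (simp add: E_iff)
  have pE: "push X y del \<in> E X C I0" using push_E[OF del y] .
  have pz: "push X y del = ezero X C I0" using pE I E_Ob[OF pE] unfolding inj_obj_def by blast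
  have Co: "C \<in> Ob X" using E_Ob del by auto
  have "\<exists>t\<in>Hom X C (tgt X s). cmp X e t = idm X C"
    using exact_cmp_deflation[OF H(4) pE idm_Hom[OF Co]] pull_idm[OF pE] pz by simp
  then obtain t where t: "t \<in> Hom X C (tgt X h')" "cmp X e t = idm X C" using H(2) HomD(3) by metis
  have e: "e \<in> Hom X (tgt X h') C" using H(3) tg by simp
  have f: "f \<in> Hom X (tgt X x) (src X g)" using real_inflation_Hom[OF r2] m by simp
  have d''E: "d'' \<in> E X (tgt X h') A" using real_E[OF H(1)] HomD(2)[OF cmp_Hom[OF x f]] by simp
  have "del = pull X (cmp X e t) del" using t pull_idm[OF del] by simp
  also have "\<dots> = pull X t (pull X e del)" using pull_cmp[OF del e t(1)] .
  also have "\<dots> = push X x (pull X t d'')" using H(5) push_pull[OF d''E x t(1)] by simp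
  finally show ?thesis using pull_E[OF d''E t(1)] by blast
qed

subsection \<open>Orthogonal ideals\<close>

lemma E_orthogonal_mzero_left:
  assumes "A \<in> Ob X" "C \<in> Ob X" "g \<in> Mor X"
  shows "E_orthogonal X (mzero X A C) g"
  unfolding E_orthogonal_def
  using pull_mzero[OF push_E[OF _ Mor_Hom]] HomD[OF mzero_Hom] assms by simp

lemma E_orthogonal_mzero_right:
  assumes "f \<in> Mor X" "A \<in> Ob X" "Y \<in> Ob X"
  shows "E_orthogonal X f (mzero X A Y)"
  unfolding E_orthogonal_def
  using push_mzero pull_ezero[OF Mor_Hom] HomD[OF mzero_Hom] assms by simp

lemma E_orthogonal_madd_left:
  assumes "E_orthogonal X f g" "E_orthogonal X f' g" "f \<in> Hom X W C" "f' \<in> Hom X W C" "g \<in> Mor X"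
  shows "E_orthogonal X (madd X f f') g"
  unfolding E_orthogonal_def
proof
  fix d assume "d \<in> E X (tgt X (madd X f f')) (src X g)"
  then have d: "d \<in> E X C (src X g)" using HomD(3)[OF madd_Hom] assms(3,4) by simp
  have "pull X (madd X f f') (push X g d) = eadd X (pull X f (push X g d)) (pull X f' (push X g d))"
    using pull_madd[OF push_E[OF d Mor_Hom] assms(3,4)] assms(5) by simp
  also have "\<dots> = ezero X W (tgt X g)"
    using assms d HomD Hom_Ob Mor_Ob abelian_group_on.add_zero_left[OF E_group ezero_E]
    unfolding E_orthogonal_def by metis
  finally show "pull X (madd X f f') (push X g d) = ezero X (src X (madd X f f')) (tgt X g)"
    using HomD(2)[OF madd_Hom[OF assms(3,4)]] by simp
qed

lemma E_orthogonal_madd_right: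
  assumes "E_orthogonal X f g" "E_orthogonal X f g'" "g \<in> Hom X A Y" "g' \<in> Hom X A Y" "f \<in> Mor X"
  shows "E_orthogonal X f (madd X g g')"
  unfolding E_orthogonal_def
proof
  fix d assume "d \<in> E X (tgt X f) (src X (madd X g g'))"
  then have d: "d \<in> E X (tgt X f) A" using HomD(2)[OF madd_Hom] assms(3,4) by simp
  have "pull X f (push X (madd X g g') d) = eadd X (pull X f (push X g d)) (pull X f (push X g' d))"
    using push_madd[OF d assms(3,4)] pull_eadd[OF push_E[OF d assms(3)] push_E[OF d assms(4)]]
      Mor_Hom[OF assms(5)] by simp
  also have "\<dots> = ezero X (src X f) Y"
    using assms d HomD Hom_Ob Mor_Ob abelian_group_on.add_zero_left[OF E_group ezero_E]
    unfolding E_orthogonal_def by metis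
  finally show "pull X f (push X (madd X g g') d) = ezero X (src X f) (tgt X (madd X g g'))"
    using HomD(3)[OF madd_Hom[OF assms(3,4)]] by simp
qed

lemma E_orthogonal_cmp_left:
  assumes fg: "E_orthogonal X f g" and f: "f \<in> Mor X" and g: "g \<in> Mor X"
    and c: "c \<in> Hom X W (src X f)" and h: "h \<in> Hom X (tgt X f) C"
  shows "E_orthogonal X (cmp X h (cmp X f c)) g"
  unfolding E_orthogonal_def
proof
  have fc: "cmp X f c \<in> Hom X W (tgt X f)" using cmp_Hom[OF c Mor_Hom[OF f]] .
  fix d assume "d \<in> E X (tgt X (cmp X h (cmp X f c))) (src X g)"
  then have d: "d \<in> E X C (src X g)" using HomD(3)[OF cmp_Hom[OF fc h]] by simp
  have "pull X (cmp X h (cmp X f c)) (push X g d) = pull X c (pull X f (push X g (pull X h d)))"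
    using pull_cmp[OF push_E[OF d Mor_Hom[OF g]] h fc] pull_cmp[OF _ Mor_Hom[OF f] c]
      push_pull[OF d Mor_Hom[OF g] h] pull_E[OF push_E[OF d Mor_Hom[OF g]] h] by simp
  also have "\<dots> = ezero X W (tgt X g)"
    using fg pull_E[OF d h] pull_ezero[OF c Mor_Ob(2)[OF g]] unfolding E_orthogonal_def by simp
  finally show "pull X (cmp X h (cmp X f c)) (push X g d) =
      ezero X (src X (cmp X h (cmp X f c))) (tgt X g)"
    using HomD(2)[OF cmp_Hom[OF fc h]] by simp
qed

lemma E_orthogonal_cmp_right:
  assumes fg: "E_orthogonal X f g" and f: "f \<in> Mor X" and g: "g \<in> Mor X"
    and a: "a \<in> Hom X A (src X g)" and k: "k \<in> Hom X (tgt X g) Y"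
  shows "E_orthogonal X f (cmp X k (cmp X g a))"
  unfolding E_orthogonal_def
proof
  have ga: "cmp X g a \<in> Hom X A (tgt X g)" using cmp_Hom[OF a Mor_Hom[OF g]] .
  fix d assume "d \<in> E X (tgt X f) (src X (cmp X k (cmp X g a)))"
  then have d: "d \<in> E X (tgt X f) A" using HomD(2)[OF cmp_Hom[OF ga k]] by simp
  have "pull X f (push X (cmp X k (cmp X g a)) d) = push X k (pull X f (push X g (push X a d)))"
    using push_cmp[OF d ga k] push_cmp[OF d a Mor_Hom[OF g]]
      push_pull[OF push_E[OF push_E[OF d a] Mor_Hom[OF g]] k Mor_Hom[OF f]] by simp
  also have "\<dots> = ezero X (src X f) Y"
    using fg push_E[OF d a] push_ezero[OF k Mor_Ob(1)[OF f]] unfolding E_orthogonal_def by simp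
  finally show "pull X f (push X (cmp X k (cmp X g a)) d) =
      ezero X (src X f) (tgt X (cmp X k (cmp X g a)))"
    using HomD(3)[OF cmp_Hom[OF ga k]] by simp
qed

lemma perpR_ideal:
  assumes M: "M \<subseteq> Mor X"
  shows "ideal X (perpR X M)"
  unfolding ideal_def
proof (intro conjI ballI allI impI)
  show "perpR X M \<subseteq> Mor X" unfolding perpR_def by blast
  show "mzero X A B \<in> perpR X M" if "A \<in> Ob X" "B \<in> Ob X" for A B
    using that M E_orthogonal_mzero_right HomD(1)[OF mzero_Hom] by (auto simp: perpR_iff)
  show "madd X f g \<in> perpR X M"
    if "f \<in> perpR X M" "g \<in> perpR X M" "src X f = src X g \<and> tgt X f = tgt X g" for f g
  proof -
    have "f \<in> Hom X (src X f) (tgt X f)" "g \<in> Hom X (src X f) (tgt X f)"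
      using that Mor_Hom perpR_Mor by metis+
    then show ?thesis
      using that M E_orthogonal_madd_right HomD(1)[OF madd_Hom] by (auto simp: perpR_iff)
  qed
  show "cmp X g f \<in> perpR X M" if "f \<in> perpR X M" "g \<in> Mor X" "tgt X f = src X g" for f g
  proof -
    have "cmp X g (cmp X f (idm X (src X f))) = cmp X g f"
      using that cmp_idm_right Mor_Hom perpR_Mor by metis
    then show ?thesis
      using that M E_orthogonal_cmp_right[of _ f "idm X (src X f)" "src X f" g "tgt X g"]
        idm_Hom Mor_Ob Mor_Hom cmp_Mor by (auto simp: perpR_iff)
  qed
  show "cmp X f g \<in> perpR X M" if "f \<in> perpR X M" "g \<in> Mor X" "tgt X g = src X f" for f g
  proof -
    have g: "g \<in> Hom X (src X g) (src X f)" using that Mor_Hom by metis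
    have "cmp X (idm X (tgt X f)) (cmp X f g) = cmp X f g"
      using that cmp_idm_left cmp_Hom Mor_Hom perpR_Mor by metis
    then show ?thesis using g
      using that M E_orthogonal_cmp_right[of _ f g "src X g" "idm X (tgt X f)" "tgt X f"]
        idm_Hom Mor_Ob Mor_Hom cmp_Mor by (auto simp: perpR_iff)
  qed
qed

lemma perpL_ideal:
  assumes M: "M \<subseteq> Mor X"
  shows "ideal X (perpL X M)"
  unfolding ideal_def
proof (intro conjI ballI allI impI)
  show "perpL X M \<subseteq> Mor X" by (rule perpL_subset_Mor)
  show "mzero X A B \<in> perpL X M" if "A \<in> Ob X" "B \<in> Ob X" for A B
    using that M E_orthogonal_mzero_left HomD(1)[OF mzero_Hom] by (auto simp: perpL_iff)
  show "madd X f g \<in> perpL X M"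
    if "f \<in> perpL X M" "g \<in> perpL X M" "src X f = src X g \<and> tgt X f = tgt X g" for f g
  proof -
    have "f \<in> Hom X (src X f) (tgt X f)" "g \<in> Hom X (src X f) (tgt X f)"
      using that Mor_Hom perpL_Mor by metis+
    then show ?thesis
      using that M E_orthogonal_madd_left HomD(1)[OF madd_Hom] by (auto simp: perpL_iff)
  qed
  show "cmp X g f \<in> perpL X M" if "f \<in> perpL X M" "g \<in> Mor X" "tgt X f = src X g" for f g
  proof -
    have "cmp X g (cmp X f (idm X (src X f))) = cmp X g f"
      using that cmp_idm_right Mor_Hom perpL_Mor by metis
    then show ?thesis
      using that M E_orthogonal_cmp_left[of f _ "idm X (src X f)" "src X f" g "tgt X g"]
        idm_Hom Mor_Ob Mor_Hom cmp_Mor by (auto simp: perpL_iff)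
  qed
  show "cmp X f g \<in> perpL X M" if "f \<in> perpL X M" "g \<in> Mor X" "tgt X g = src X f" for f g
  proof -
    have g: "g \<in> Hom X (src X g) (src X f)" using that Mor_Hom by metis
    have "cmp X (idm X (tgt X f)) (cmp X f g) = cmp X f g"
      using that cmp_idm_left cmp_Hom Mor_Hom perpL_Mor by metis
    then show ?thesis using g
      using that M E_orthogonal_cmp_left[of f _ g "src X g" "idm X (tgt X f)" "tgt X f"]
        idm_Hom Mor_Ob Mor_Hom cmp_Mor by (auto simp: perpL_iff)
  qed
qed

subsection \<open>Phantoms and the subfunctor \<open>Ph(\<bbbG>)\<^sup>\<star>\<close>\<close>

lemma E_orthogonal_Ph_F_inj:
  assumes f: "f \<in> Ph X G" and i: "i \<in> F_inj X G"
  shows "E_orthogonal X f i"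
  unfolding E_orthogonal_def
proof
  fix d assume d: "d \<in> E X (tgt X f) (src X i)"
  have "pull X f (push X i d) = push X i (pull X f d)"
    using push_pull[OF d Mor_Hom[OF F_inj_Mor[OF i]] Mor_Hom[OF Ph_Mor[OF f]]] by simp
  also have "\<dots> = ezero X (src X f) (tgt X i)"
    using F_injD[OF i PhD[OF f d]] pull_E[OF d Mor_Hom[OF Ph_Mor[OF f]]] by (simp add: E_iff)
  finally show "pull X f (push X i d) = ezero X (src X f) (tgt X i)" .
qed

lemma Ph_subset_perpL_F_inj: "Ph X G \<subseteq> perpL X (F_inj X G)"
  using E_orthogonal_Ph_F_inj Ph_Mor by (auto simp: perpL_iff)

lemma F_inj_subset_perpR_Ph: "F_inj X G \<subseteq> perpR X (Ph X G)"
  using E_orthogonal_Ph_F_inj F_inj_Mor by (auto simp: perpR_iff)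

lemma starE:
  assumes M: "M \<subseteq> Mor X" and e: "e \<in> star X M"
  obtains m d where "m \<in> M" "d \<in> E X (tgt X m) (eA X e)" "e = pull X m d" "src X m = eC X e"
proof -
  obtain m d where m: "m \<in> M" and d: "d \<in> E X (tgt X m) (eA X d)" and ed: "e = pull X m d"
    using e unfolding star_def by (auto simp: E_iff)
  have "pull X m d \<in> E X (src X m) (eA X d)" using pull_E[OF d Mor_Hom] m M by auto
  then have "d \<in> E X (tgt X m) (eA X e)" "src X m = eC X e" using d ed by (simp_all add: E_iff)
  then show ?thesis using that m ed by blast
qed

lemma perpR_eq_F_inj_star:
  assumes M: "M \<subseteq> Mor X"
  shows "perpR X M = F_inj X (star X M)"
proof
  show "perpR X M \<subseteq> F_inj X (star X M)"
  proof
    fix g assume g: "g \<in> perpR X M"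
    show "g \<in> F_inj X (star X M)" unfolding F_inj_def
    proof (intro CollectI conjI ballI impI)
      show "g \<in> Mor X" using perpR_Mor[OF g] .
      fix e assume e: "e \<in> star X M" and eA: "eA X e = src X g"
      obtain m d where m: "m \<in> M" and d: "d \<in> E X (tgt X m) (src X g)"
        and ed: "e = pull X m d" and s: "src X m = eC X e"
        using starE[OF M e] eA by metis
      have "push X g e = pull X m (push X g d)"
        using ed push_pull[OF d Mor_Hom[OF perpR_Mor[OF g]] Mor_Hom] m M by auto
      also have "\<dots> = ezero X (eC X e) (tgt X g)" using perpRD[OF g m d] s by simp
      finally show "push X g e = ezero X (eC X e) (tgt X g)" .
    qed
  qed
  show "F_inj X (star X M) \<subseteq> perpR X M"
  proof
    fix g assume g: "g \<in> F_inj X (star X M)"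
    show "g \<in> perpR X M"
    proof (rule perpRI[OF F_inj_Mor[OF g]])
      fix m d assume m: "m \<in> M" and d: "d \<in> E X (tgt X m) (src X g)"
      have mh: "m \<in> Hom X (src X m) (tgt X m)" using m M Mor_Hom by blast
      have "pull X m (push X g d) = push X g (pull X m d)"
        using push_pull[OF d Mor_Hom[OF F_inj_Mor[OF g]] mh] by simp
      also have "\<dots> = ezero X (src X m) (tgt X g)"
        using F_injD[OF g starI[OF m d]] pull_E[OF d mh] by (simp add: E_iff)
      finally show "pull X m (push X g d) = ezero X (src X m) (tgt X g)" .
    qed
  qed
qed

lemma Ph_cmp_left:
  assumes f: "f \<in> Ph X G" and h: "h \<in> Hom X (tgt X f) C"
  shows "cmp X h f \<in> Ph X G"
proof (rule PhI)
  have fh: "f \<in> Hom X (src X f) (tgt X f)" using Mor_Hom[OF Ph_Mor[OF f]] .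
  show "cmp X h f \<in> Mor X" using HomD(1)[OF cmp_Hom[OF fh h]] .
  fix d A assume "d \<in> E X (tgt X (cmp X h f)) A"
  then have d: "d \<in> E X C A" using HomD(3)[OF cmp_Hom[OF fh h]] by simp
  show "pull X (cmp X h f) d \<in> G" using pull_cmp[OF d h fh] PhD[OF f pull_E[OF d h]] by simp
qed

lemma Ph_cmp_right:
  assumes G: "additive_subfunctor X G" and f: "f \<in> Ph X G" and c: "c \<in> Hom X W (src X f)"
  shows "cmp X f c \<in> Ph X G"
proof (rule PhI)
  have fh: "f \<in> Hom X (src X f) (tgt X f)" using Mor_Hom[OF Ph_Mor[OF f]] .
  show "cmp X f c \<in> Mor X" using HomD(1)[OF cmp_Hom[OF c fh]] .
  fix d A assume "d \<in> E X (tgt X (cmp X f c)) A"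
  then have d: "d \<in> E X (tgt X f) A" using HomD(3)[OF cmp_Hom[OF c fh]] by simp
  show "pull X (cmp X f c) d \<in> G"
    using pull_cmp[OF d fh c] subfunctor_pull[OF G PhD[OF f d] pull_E[OF d fh] c] by simp
qed

lemma Ph_madd:
  assumes G: "additive_subfunctor X G" and f: "f \<in> Ph X G" "f \<in> Hom X W C"
    and g: "g \<in> Ph X G" "g \<in> Hom X W C"
  shows "madd X f g \<in> Ph X G"
proof (rule PhI)
  show "madd X f g \<in> Mor X" using HomD(1)[OF madd_Hom[OF f(2) g(2)]] .
  fix d A assume "d \<in> E X (tgt X (madd X f g)) A"
  then have d: "d \<in> E X C A" using HomD(3)[OF madd_Hom[OF f(2) g(2)]] by simp
  show "pull X (madd X f g) d \<in> G"
    using pull_madd[OF d f(2) g(2)] subfunctor_eadd[OF G _ _ pull_E[OF d f(2)] pull_E[OF d g(2)]]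
      PhD[OF f(1)] PhD[OF g(1)] d HomD(3)[OF f(2)] HomD(3)[OF g(2)] by simp
qed

lemma Ph_mzero:
  assumes G: "additive_subfunctor X G" and W: "W \<in> Ob X" and C: "C \<in> Ob X"
  shows "mzero X W C \<in> Ph X G"
proof (rule PhI)
  show "mzero X W C \<in> Mor X" using HomD(1)[OF mzero_Hom[OF W C]] .
  fix d A assume "d \<in> E X (tgt X (mzero X W C)) A"
  then have d: "d \<in> E X C A" using HomD(3)[OF mzero_Hom[OF W C]] by simp
  show "pull X (mzero X W C) d \<in> G"
    using pull_mzero[OF d W] subfunctor_ezero[OF G W E_Ob(2)[OF d]] by simp
qed

lemma ideal_mneg:
  assumes K: "ideal X K" and f: "f \<in> K"
  shows "mneg X f \<in> K"
proof -
  have fh: "f \<in> Hom X (src X f) (tgt X f)" using ideal_subset_Mor[OF K] f Mor_Hom by blast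
  have io: "idm X (tgt X f) \<in> Hom X (tgt X f) (tgt X f)" using idm_Hom Hom_Ob(2)[OF fh] .
  have "mneg X f = cmp X (mneg X (idm X (tgt X f))) f"
    using cmp_mneg_left[OF fh Hom_Ob(2)[OF fh] io] cmp_idm_left[OF fh] by simp
  then show ?thesis using ideal_cmp_left[OF K f fh mneg_Hom[OF io]] by simp
qed

lemma ideal_madd_cancel:
  assumes K: "ideal X K" and p: "p \<in> K" "p \<in> Hom X A B" and g: "g \<in> Hom X A B"
    and pg: "madd X p g \<in> K"
  shows "g \<in> K"
proof -
  interpret G: abelian_group_on "Hom X A B" "madd X" "mneg X" "mzero X A B"
    using Hom_group Hom_Ob p(2) by blast
  have "g = madd X (madd X p g) (mneg X p)"
    using G.add_neg_cancel[OF p(2) g] G.add_commute[OF p(2) g] by simp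
  then show ?thesis
    using ideal_madd[OF K pg ideal_mneg[OF K p(1)] madd_Hom[OF p(2) g] mneg_Hom[OF p(2)]] by simp
qed

lemma star_Ph_subset: "star X (Ph X G) \<subseteq> G"
  using PhD Ph_Mor by (auto elim!: starE[rotated])

lemma biprod_E_glue:
  assumes bp: "is_biprod X C1 C2 S i1 i2 p1 p2" and d1: "d1 \<in> E X C1 A" and d2: "d2 \<in> E X C2 A"
  shows "\<exists>D\<in>E X S A. pull X i1 D = d1 \<and> pull X i2 D = d2"
proof -
  have B: "i1 \<in> Hom X C1 S" "i2 \<in> Hom X C2 S" "p1 \<in> Hom X S C1" "p2 \<in> Hom X S C2"
    "cmp X p1 i1 = idm X C1" "cmp X p2 i2 = idm X C2"
    "cmp X p1 i2 = mzero X C2 C1" "cmp X p2 i1 = mzero X C1 C2"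
    using bp unfolding is_biprod_def by auto
  have Ob: "C1 \<in> Ob X" "C2 \<in> Ob X" using E_Ob d1 d2 by blast+
  interpret G1: abelian_group_on "E X C1 A" "eadd X" "eneg X" "ezero X C1 A"
    using E_group E_Ob d1 by blast
  interpret G2: abelian_group_on "E X C2 A" "eadd X" "eneg X" "ezero X C2 A"
    using E_group E_Ob d2 by blast
  define D where "D = eadd X (pull X p1 d1) (pull X p2 d2)"
  have P1: "pull X p1 d1 \<in> E X S A" and P2: "pull X p2 d2 \<in> E X S A"
    using pull_E[OF d1 B(3)] pull_E[OF d2 B(4)] .
  have "pull X i1 D = eadd X (pull X (cmp X p1 i1) d1) (pull X (cmp X p2 i1) d2)"
    using pull_eadd[OF P1 P2 B(1)] pull_cmp[OF d1 B(3) B(1)] pull_cmp[OF d2 B(4) B(1)] D_def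
    by simp
  also have "\<dots> = d1"
    using B pull_idm[OF d1] pull_mzero[OF d2 Ob(1)] G1.add_zero_right[OF d1] by simp
  finally have "pull X i1 D = d1" .
  moreover have "pull X i2 D = eadd X (pull X (cmp X p1 i2) d1) (pull X (cmp X p2 i2) d2)"
    using pull_eadd[OF P1 P2 B(2)] pull_cmp[OF d1 B(3) B(2)] pull_cmp[OF d2 B(4) B(2)] D_def
    by simp
  moreover have "\<dots> = d2"
    using B pull_idm[OF d2] pull_mzero[OF d1 Ob(2)] G2.add_zero_left[OF d2] by simp
  ultimately show ?thesis using eadd_E[OF P1 P2] D_def by auto
qed

text \<open>A sum \<open>m\<^sub>1\<^sup>* \<delta>\<^sub>1 + m\<^sub>2\<^sup>* \<delta>\<^sub>2\<close> is the pullback of an extension of the biproduct of the targets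
  along the phantom \<open>i\<^sub>1 m\<^sub>1 + i\<^sub>2 m\<^sub>2\<close>.\<close>

lemma star_Ph_eadd:
  assumes G: "additive_subfunctor X G"
    and d1: "d1 \<in> star X (Ph X G)" and d2: "d2 \<in> star X (Ph X G)"
    and eq: "eC X d1 = eC X d2" "eA X d1 = eA X d2"
  shows "eadd X d1 d2 \<in> star X (Ph X G)"
proof -
  note PhM = Ph_subset_Mor[of X G]
  obtain m1 del1 where m1: "m1 \<in> Ph X G" and D1: "del1 \<in> E X (tgt X m1) (eA X d1)"
    and e1: "d1 = pull X m1 del1" and s1: "src X m1 = eC X d1"
    using starE[OF PhM d1] by blast
  obtain m2 del2 where m2: "m2 \<in> Ph X G" and D2: "del2 \<in> E X (tgt X m2) (eA X d1)"
    and e2: "d2 = pull X m2 del2" and s2: "src X m2 = eC X d1"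
    using starE[OF PhM d2] eq by metis
  have m1h: "m1 \<in> Hom X (eC X d1) (tgt X m1)" and m2h: "m2 \<in> Hom X (eC X d1) (tgt X m2)"
    using Mor_Hom Ph_Mor m1 m2 s1 s2 by metis+
  obtain S i1 i2 p1 p2 where bp: "is_biprod X (tgt X m1) (tgt X m2) S i1 i2 p1 p2"
    using biprod_exists E_Ob D1 D2 by blast
  then have i: "i1 \<in> Hom X (tgt X m1) S" "i2 \<in> Hom X (tgt X m2) S" unfolding is_biprod_def by auto
  obtain D where D: "D \<in> E X S (eA X d1)" and Di: "pull X i1 D = del1" "pull X i2 D = del2"
    using biprod_E_glue[OF bp D1 D2] by blast
  have im: "cmp X i1 m1 \<in> Hom X (eC X d1) S" "cmp X i2 m2 \<in> Hom X (eC X d1) S"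
    using cmp_Hom m1h m2h i by blast+
  have "madd X (cmp X i1 m1) (cmp X i2 m2) \<in> Ph X G"
    using Ph_madd[OF G Ph_cmp_left[OF m1 i(1)] im(1) Ph_cmp_left[OF m2 i(2)] im(2)] .
  moreover have "pull X (madd X (cmp X i1 m1) (cmp X i2 m2)) D = eadd X d1 d2"
    using pull_madd[OF D im] pull_cmp[OF D i(1) m1h] pull_cmp[OF D i(2) m2h] Di e1 e2 by simp
  ultimately show ?thesis using starI D HomD(3)[OF madd_Hom[OF im]] by metis
qed

lemma star_Ph_pull:
  assumes G: "additive_subfunctor X G" and d: "d \<in> star X (Ph X G)"
    and c: "c \<in> Mor X" "tgt X c = eC X d"
  shows "pull X c d \<in> star X (Ph X G)"
proof -
  obtain m del where m: "m \<in> Ph X G" and del: "del \<in> E X (tgt X m) (eA X d)"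
    and e: "d = pull X m del" and s: "src X m = eC X d"
    using starE[OF Ph_subset_Mor d] by blast
  have mh: "m \<in> Hom X (src X m) (tgt X m)" and ch: "c \<in> Hom X (src X c) (src X m)"
    using Mor_Hom Ph_Mor[OF m] c s by metis+
  have "pull X c d = pull X (cmp X m c) del" using pull_cmp[OF del mh ch] e by simp
  then show ?thesis
    using starI[OF Ph_cmp_right[OF G m ch]] del HomD(3)[OF cmp_Hom[OF ch mh]] by metis
qed

lemma star_Ph_push:
  assumes d: "d \<in> star X (Ph X G)" and a: "a \<in> Mor X" "src X a = eA X d"
  shows "push X a d \<in> star X (Ph X G)"
proof -
  obtain m del where m: "m \<in> Ph X G" and del: "del \<in> E X (tgt X m) (eA X d)"
    and e: "d = pull X m del"
    using starE[OF Ph_subset_Mor d] by blast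
  have ah: "a \<in> Hom X (eA X d) (tgt X a)" using Mor_Hom[OF a(1)] a(2) by simp
  have "push X a d = pull X m (push X a del)"
    using push_pull[OF del ah Mor_Hom[OF Ph_Mor[OF m]]] e by simp
  then show ?thesis using starI[OF m push_E[OF del ah]] by simp
qed

lemma star_Ph_subfunctor:
  assumes G: "additive_subfunctor X G"
  shows "additive_subfunctor X (star X (Ph X G))"
  unfolding additive_subfunctor_def
proof (intro conjI ballI impI allI)
  show "star X (Ph X G) \<subseteq> etcat.Ex X"
  proof
    fix e assume "e \<in> star X (Ph X G)"
    then obtain m d where "m \<in> Ph X G" "d \<in> E X (tgt X m) (eA X e)" "e = pull X m d"
      using starE[OF Ph_subset_Mor] by blast
    then show "e \<in> etcat.Ex X" using E_Ex[OF pull_E[OF _ Mor_Hom[OF Ph_Mor]]] by metis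
  qed
  show "ezero X C A \<in> star X (Ph X G)" if "C \<in> Ob X" "A \<in> Ob X" for C A
    using starI[OF Ph_mzero[OF G that(1) that(1)]] ezero_E[OF that]
      pull_mzero[OF ezero_E[OF that] that(1)] HomD(3)[OF mzero_Hom[OF that(1) that(1)]] by metis
  show "eadd X d d' \<in> star X (Ph X G)"
    if "d \<in> star X (Ph X G)" "d' \<in> star X (Ph X G)" "eC X d = eC X d' \<and> eA X d = eA X d'"
    for d d'
    using star_Ph_eadd[OF G] that by blast
  show "eneg X d \<in> star X (Ph X G)" if d: "d \<in> star X (Ph X G)" for d
  proof -
    obtain m del where "m \<in> Ph X G" "del \<in> E X (tgt X m) (eA X d)" "d = pull X m del"
      using starE[OF Ph_subset_Mor d] by blast
    then show ?thesis using pull_eneg[OF _ Mor_Hom[OF Ph_Mor]] starI[OF _ eneg_E] by metis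
  qed
  show "pull X c d \<in> star X (Ph X G)" if "d \<in> star X (Ph X G)" "c \<in> Mor X" "tgt X c = eC X d"
    for d c
    using star_Ph_pull[OF G] that .
  show "push X a d \<in> star X (Ph X G)" if "d \<in> star X (Ph X G)" "a \<in> Mor X" "src X a = eA X d"
    for d a
    using star_Ph_push that .
qed

lemma propC_perpR:
  assumes M: "M \<subseteq> Mor X"
  shows "propC X (perpR X M)"
  unfolding propC_def
proof (intro allI impI)
  fix g x y d x' y' a b c
  assume "real X g x y \<and> real X d x' y' \<and> inj_obj X (tgt X y) \<and>
      tri_morph X g x y d x' y' a b c \<and> a \<in> perpR X M"
  then have rg: "real X g x y" and rd: "real X d x' y'" and I: "inj_obj X (tgt X y)"
    and t: "tri_morph X g x y d x' y' a b c" and a: "a \<in> perpR X M" by auto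
  note T = tri_morphD[OF t]
  have gE: "g \<in> E X (tgt X y) (src X x)" using real_E[OF rg] .
  have xh: "x \<in> Hom X (src X x) (tgt X x)" using real_Hom[OF rg gE] by simp
  have ah: "a \<in> Hom X (src X x) (src X x')" using T by simp
  have x'h: "x' \<in> Hom X (src X x') (tgt X x')"
    using real_inflation_Hom[OF rd] real_mid[OF rd] by simp
  have bh: "b \<in> Hom X (tgt X x) (tgt X x')" using T by simp
  show "b \<in> perpR X M"
  proof (rule perpRI)
    show "b \<in> Mor X" using bh HomD(1) by blast
    fix m dl assume m: "m \<in> M" and dl: "dl \<in> E X (tgt X m) (src X b)"
    have mh: "m \<in> Hom X (src X m) (tgt X m)" using m M Mor_Hom by blast
    have dlE: "dl \<in> E X (tgt X m) (tgt X x)" using dl HomD(2)[OF bh] by simp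
    obtain eps where eE: "eps \<in> E X (tgt X m) (src X x)" and de: "dl = push X x eps"
      using push_of_injective_triangle[OF rg gE I dlE] by blast
    have "push X b dl = push X (cmp X b x) eps" using de push_cmp[OF eE xh bh] by simp
    also have "\<dots> = push X x' (push X a eps)" using T push_cmp[OF eE ah x'h] by simp
    finally have "pull X m (push X b dl) = push X x' (pull X m (push X a eps))"
      using push_pull[OF push_E[OF eE ah] x'h mh] by simp
    also have "\<dots> = push X x' (ezero X (src X m) (tgt X a))"
      using perpRD[OF a m] eE HomD(2)[OF ah] by simp
    also have "\<dots> = ezero X (src X m) (tgt X x')"
      using push_ezero[OF x'h] Hom_Ob[OF mh] HomD(3)[OF ah] by simp
    finally show "pull X m (push X b dl) = ezero X (src X m) (tgt X b)" using HomD(3)[OF bh] by simp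
  qed
qed

subsection \<open>Precovers, preenvelopes and property (C)\<close>

text \<open>Every extension of C is a pushout of \<open>\<gamma>\<close> because p is a projective morphism, and
  \<open>\<phi>\<^sup>* \<gamma>\<close> is a pullback of \<open>\<eta>\<close> because \<open>e\<^sub>* \<phi>\<^sup>* \<gamma> = \<phi>\<^sup>* e\<^sub>* \<gamma> = 0\<close>.\<close>

lemma deflation_of_pushout_in_Ph:
  assumes G: "additive_subfunctor X G"
    and rg: "real X gam k p" and gE: "gam \<in> E X C K"
    and proj: "\<And>A d. A \<in> Ob X \<Longrightarrow> d \<in> E X C A \<Longrightarrow> pull X p d = ezero X (src X p) A"
    and re: "real X eta e f" and eG: "eta \<in> G" and eE: "eta \<in> E X (tgt X f) K"
    and rd: "real X (push X e gam) x' phi"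
  shows "phi \<in> Ph X G"
proof -
  have eh: "e \<in> Hom X K (tgt X e)" using real_Hom[OF re eE] by simp
  have dE: "push X e gam \<in> E X C (tgt X e)" using push_E[OF gE eh] .
  have ph: "phi \<in> Hom X (tgt X x') C" using real_Hom[OF rd dE] by simp
  show ?thesis
  proof (rule PhI)
    show "phi \<in> Mor X" using ph HomD(1) by blast
    fix d A assume "d \<in> E X (tgt X phi) A"
    then have d: "d \<in> E X C A" using HomD(3)[OF ph] by simp
    obtain h where h: "h \<in> Hom X K A" and dh: "d = push X h gam"
      using exact_pull_deflation[OF rg gE d proj[OF E_Ob(2)[OF d] d]] by blast
    have pg: "pull X phi gam \<in> E X (tgt X x') K" using pull_E[OF gE ph] .
    have "push X e (pull X phi gam) = pull X phi (push X e gam)" using push_pull[OF gE eh ph] .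
    also have "\<dots> = ezero X (tgt X x') (tgt X e)"
      using pull_deflation_eq_zero[OF rd] real_mid[OF rd] real_eA[OF rd] dE by (simp add: E_iff)
    finally obtain c where c: "c \<in> Hom X (tgt X x') (tgt X f)"
      and pc: "pull X phi gam = pull X c eta"
      using exact_push_inflation[OF re eE pg] by blast
    have "pull X phi gam \<in> G" using pc subfunctor_pull[OF G eG eE c] by simp
    moreover have "pull X phi d = push X h (pull X phi gam)" using dh push_pull[OF gE h ph] by simp
    ultimately show "pull X phi d \<in> G" using subfunctor_push[OF G _ pg h] by simp
  qed
qed

lemma inflation_of_pullback_in_perpR:
  assumes M: "ideal X M"
    and re: "real X eps x y" and I: "inj_obj X (tgt X x)" and eE: "eps \<in> E X C A"
    and rd: "real X del x' phi" and dE: "del \<in> E X C B"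
    and absorb: "\<And>m. m \<in> M \<Longrightarrow> tgt X m = C \<Longrightarrow> pull X m del = ezero X (src X m) B"
    and rde: "real X (pull X phi eps) e n"
  shows "e \<in> perpR X M"
proof -
  have ph: "phi \<in> Hom X (tgt X x') C" using real_Hom[OF rd dE] by simp
  have ddE: "pull X phi eps \<in> E X (tgt X x') A" using pull_E[OF eE ph] .
  have eh: "e \<in> Hom X A (tgt X e)" using real_Hom[OF rde ddE] by simp
  show ?thesis
  proof (rule perpRI)
    show "e \<in> Mor X" using eh HomD(1) by blast
    fix m dl assume m: "m \<in> M" and dl: "dl \<in> E X (tgt X m) (src X e)"
    have mh: "m \<in> Hom X (src X m) (tgt X m)" using m ideal_subset_Mor[OF M] Mor_Hom by blast
    have dlE: "dl \<in> E X (tgt X m) A" using dl HomD(2)[OF eh] by simp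
    obtain c where c: "c \<in> Hom X (tgt X m) C" and dc: "dl = pull X c eps"
      using pull_of_injective_triangle[OF I re eE dlE] by blast
    have cmh: "cmp X c m \<in> Hom X (src X m) C" using cmp_Hom[OF mh c] .
    have "cmp X c m \<in> M" using ideal_cmp_left[OF M m mh c] .
    then have "pull X (cmp X c m) del = ezero X (src X m) B" using absorb HomD[OF cmh] by metis
    then obtain n' where n': "n' \<in> Hom X (src X m) (tgt X x')" "cmp X phi n' = cmp X c m"
      using exact_cmp_deflation[OF rd dE cmh] by blast
    have eeE: "push X e eps \<in> E X C (tgt X e)" using push_E[OF eE eh] .
    have "pull X m (push X e dl) = pull X (cmp X c m) (push X e eps)"
      using dc push_pull[OF eE eh c] pull_cmp[OF eeE c mh] by simp
    also have "\<dots> = pull X n' (push X e (pull X phi eps))"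
      using n' pull_cmp[OF eeE ph n'(1)] push_pull[OF eE eh ph] by simp
    also have "\<dots> = ezero X (src X m) (tgt X e)"
      using push_inflation_eq_zero[OF rde] ddE pull_ezero[OF n'(1)] Hom_Ob[OF eh]
      by (simp add: E_iff)
    finally show "pull X m (push X e dl) = ezero X (src X m) (tgt X e)" .
  qed
qed

lemma split_triangle_section_retraction:
  assumes r: "real X (ezero X A K) s t" and A: "A \<in> Ob X" and K: "K \<in> Ob X"
  obtains sig rho where "sig \<in> Hom X A (tgt X s)" "cmp X t sig = idm X A"
    "rho \<in> Hom X (tgt X s) K" "cmp X rho s = idm X K" "cmp X t s = mzero X K A"
proof -
  have zE: "ezero X A K \<in> E X A K" using ezero_E[OF A K] .
  obtain sig where "sig \<in> Hom X A (tgt X s)" "cmp X t sig = idm X A"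
    using exact_cmp_deflation[OF r zE idm_Hom[OF A]] pull_idm[OF zE] by auto
  moreover obtain rho where "rho \<in> Hom X (tgt X s) K" "cmp X rho s = idm X K"
    using exact_cmp_inflation[OF r zE idm_Hom[OF K]] push_idm[OF zE] by auto
  moreover have "cmp X t s = mzero X K A"
    using deflation_cmp_inflation[OF r] real_E[OF r] zE by (simp add: E_iff)
  ultimately show ?thesis using that by blast
qed

lemma eq_add_push_if_pull_deflation_eq:
  assumes re: "real X eps x y" and eE: "eps \<in> E X C A"
    and gE: "gam \<in> E X C K" and xE: "xi \<in> E X C K" and eq: "pull X y gam = pull X y xi"
  shows "\<exists>h\<in>Hom X A K. gam = eadd X xi (push X h eps)"
proof -
  have yh: "y \<in> Hom X (tgt X x) C" using real_Hom[OF re eE] by simp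
  have Ob: "C \<in> Ob X" "K \<in> Ob X" "tgt X x \<in> Ob X" using E_Ob[OF gE] Hom_Ob[OF yh] by auto
  interpret GC: abelian_group_on "E X C K" "eadd X" "eneg X" "ezero X C K" using E_group Ob by blast
  interpret GI: abelian_group_on "E X (tgt X x) K" "eadd X" "eneg X" "ezero X (tgt X x) K"
    using E_group Ob by blast
  define chi where "chi = eadd X gam (eneg X xi)"
  have chiE: "chi \<in> E X C K" using GC.add_closed[OF gE GC.neg_closed[OF xE]] chi_def by simp
  have "pull X y chi = eadd X (pull X y xi) (eneg X (pull X y xi))"
    using pull_eadd[OF gE GC.neg_closed[OF xE] yh] pull_eneg[OF xE yh] eq chi_def by simp
  then have "pull X y chi = ezero X (src X y) K"
    using GI.add_neg_right[OF pull_E[OF xE yh]] HomD(2)[OF yh] by simp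
  then obtain h where h: "h \<in> Hom X A K" and "chi = push X h eps"
    using exact_pull_deflation[OF re eE chiE] real_eA[OF re] eE by (auto simp: E_iff)
  then show ?thesis
    using GC.eq_add_if_add_neg_eq[OF xE gE push_E[OF eE h]] chi_def by auto
qed

text \<open>(ET4)\<open>\<^sup>o\<^sup>p\<close> applied to the deflations w and y; the triangle it produces between K and A
  splits because \<open>x\<^sup>* y\<^sup>* \<gamma> = 0\<close>.\<close>

lemma pushouts_of_common_extension:
  assumes re: "real X eps x y" and eE: "eps \<in> E X C A" and gE: "gam \<in> E X C K"
    and rt: "real X (pull X y gam) u w"
  obtains h' s t sig rho d'' where "real X d'' h' (cmp X y w)"
    "s \<in> Hom X K (src X h')" "h' \<in> Hom X (src X h') (tgt X u)" "cmp X h' s = u"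
    "t \<in> Hom X (src X h') A" "cmp X t s = mzero X K A"
    "sig \<in> Hom X A (src X h')" "cmp X t sig = idm X A" "rho \<in> Hom X (src X h') K"
    "d'' \<in> E X C (src X h')" "eps = push X t d''" "gam = push X rho d''"
proof -
  have xh: "x \<in> Hom X A (tgt X x)" and yh: "y \<in> Hom X (tgt X x) C" using real_Hom[OF re eE] by auto
  have tE: "pull X y gam \<in> E X (tgt X x) K" using pull_E[OF gE yh] .
  have uh: "u \<in> Hom X K (tgt X u)" and wh: "w \<in> Hom X (tgt X u) (tgt X x)"
    using real_Hom[OF rt tE] by auto
  obtain h' s t d'' where E4: "real X d'' h' (cmp X y w)"
    "s \<in> Hom X (src X u) (src X h')" "t \<in> Hom X (src X h') (src X x)"
    "cmp X h' s = u" "real X (pull X x (pull X y gam)) s t"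
    "eps = push X t d''" "push X s (pull X y gam) = pull X y d''"
    using ET4op_rule[OF rt re HomD(3)[OF wh]] by blast
  have sh: "s \<in> Hom X K (src X h')" and th: "t \<in> Hom X (src X h') A"
    using E4(2,3) HomD(2)[OF uh] HomD(2)[OF xh] by simp_all
  have ywh: "cmp X y w \<in> Hom X (tgt X u) C" using cmp_Hom[OF wh yh] .
  have h'h: "h' \<in> Hom X (src X h') (tgt X u)"
    using real_inflation_Hom[OF E4(1)] HomD(2)[OF ywh] by simp
  have d''E: "d'' \<in> E X C (src X h')" using real_E[OF E4(1)] HomD(3)[OF ywh] by simp
  have Ob: "A \<in> Ob X" "K \<in> Ob X" using E_Ob eE gE by blast+
  have "pull X x (pull X y gam) = ezero X A K"
    using pull_cmp[OF gE yh xh] deflation_cmp_inflation[OF re] real_eA[OF re] real_eC[OF re] eE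
      pull_mzero[OF gE Ob(1)] by (simp add: E_iff)
  then obtain sig r0 where split: "sig \<in> Hom X A (src X h')" "cmp X t sig = idm X A"
    "r0 \<in> Hom X (src X h') K" "cmp X r0 s = idm X K" "cmp X t s = mzero X K A"
    using split_triangle_section_retraction[of A K s t] E4(5) Ob HomD(3)[OF sh] by metis
  define xi where "xi = push X r0 d''"
  have xiE: "xi \<in> E X C K" using push_E[OF d''E split(3)] xi_def by simp
  have "pull X y xi = push X (cmp X r0 s) (pull X y gam)"
    using push_pull[OF d''E split(3) yh] E4(7) push_cmp[OF tE sh split(3)] xi_def by simp
  then have "pull X y gam = pull X y xi" using split(4) push_idm[OF tE] by simp
  then obtain h where h: "h \<in> Hom X A K" and gam: "gam = eadd X xi (push X h eps)"
    using eq_add_push_if_pull_deflation_eq[OF re eE gE xiE] by blast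
  define rho where "rho = madd X r0 (cmp X h t)"
  have hth: "cmp X h t \<in> Hom X (src X h') K" using cmp_Hom[OF th h] .
  have "rho \<in> Hom X (src X h') K" using madd_Hom[OF split(3) hth] rho_def by simp
  moreover have "gam = push X rho d''"
    using push_madd[OF d''E split(3) hth] push_cmp[OF d''E th h] E4(6) xi_def gam rho_def by simp
  ultimately show ?thesis using that E4(1,4,6) sh h'h th split d''E by blast
qed

lemma propC_cmp_inflation:
  assumes C: "propC X K" and rt: "real X tau u w" and I: "inj_obj X (tgt X w)"
    and b: "b \<in> Hom X (tgt X u) Y" and bu: "cmp X b u \<in> K"
  shows "b \<in> K"
proof -
  obtain Z where Z: "zero_obj X Z" using zero_obj_exists by blast
  have Y: "Y \<in> Ob X" using Hom_Ob(2)[OF b] .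
  have sY: "real X (ezero X Z Y) (idm X Y) (mzero X Y Z)" using real_idm_to_zero[OF Z Y] .
  have buh: "cmp X b u \<in> Hom X (src X u) Y"
    using cmp_Hom[OF _ b] real_inflation_Hom[OF rt] real_mid[OF rt] by simp
  have "\<exists>c. tri_morph X tau u w (ezero X Z Y) (idm X Y) (mzero X Y Z) (cmp X b u) b c"
  proof (rule ET3_rule[OF rt sY])
    show "cmp X b u \<in> Hom X (src X u) (src X (idm X Y))" using buh HomD(2)[OF idm_Hom[OF Y]] by simp
    show "b \<in> Hom X (tgt X u) (tgt X (idm X Y))" using b HomD(3)[OF idm_Hom[OF Y]] by simp
    show "cmp X b u = cmp X (idm X Y) (cmp X b u)" using cmp_idm_left[OF buh] by simp
  qed
  then show ?thesis using C rt sY I bu unfolding propC_def by blast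
qed

text \<open>With \<open>d''\<close> from pushouts_of_common_extension, \<open>\<beta>' = (-a) \<rho> + g t\<close> kills \<open>d''\<close> and
  so factors as \<open>\<beta> h'\<close>; then \<open>\<beta> u = (-a) \<rho> s \<in> K\<close>, property (C) gives \<open>\<beta> \<in> K\<close>, and
  \<open>g = \<beta> h' \<sigma> + a \<rho> \<sigma>\<close>.\<close>

lemma mem_ideal_if_push_eq_push_mem:
  assumes K: "ideal X K" and C: "propC X K"
    and re: "real X eps x y" and I: "inj_obj X (tgt X x)" and eE: "eps \<in> E X (tgt X y) A"
    and gam: "gam \<in> E X (tgt X y) B" and g: "g \<in> Hom X A Y" and a: "a \<in> K" "a \<in> Hom X B Y"
    and eq: "push X g eps = push X a gam"
  shows "g \<in> K"
proof -
  have yh: "y \<in> Hom X (tgt X x) (tgt X y)" using real_Hom[OF re eE] by simp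
  obtain u w where ru: "real X (pull X y gam) u w"
    using real_exists E_Ex[OF pull_E[OF gam yh]] by blast
  have wh: "w \<in> Hom X (tgt X u) (tgt X x)" using real_Hom[OF ru pull_E[OF gam yh]] by simp
  obtain h' s t sig rho d'' where d'': "real X d'' h' (cmp X y w)"
    "s \<in> Hom X B (src X h')" "h' \<in> Hom X (src X h') (tgt X u)" "cmp X h' s = u"
    "t \<in> Hom X (src X h') A" "cmp X t s = mzero X B A"
    "sig \<in> Hom X A (src X h')" "cmp X t sig = idm X A" "rho \<in> Hom X (src X h') B"
    "d'' \<in> E X (tgt X y) (src X h')" "eps = push X t d''" "gam = push X rho d''"
    by (rule pushouts_of_common_extension[OF re eE gam ru])
  have Ob: "B \<in> Ob X" "Y \<in> Ob X" "tgt X y \<in> Ob X" using Hom_Ob a(2) E_Ob eE by blast+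
  interpret GY: abelian_group_on "E X (tgt X y) Y" "eadd X" "eneg X" "ezero X (tgt X y) Y"
    using E_group Ob by blast
  define na where "na = mneg X a"
  have nah: "na \<in> Hom X B Y" using mneg_Hom[OF a(2)] na_def by simp
  have naK: "na \<in> K" using ideal_mneg[OF K a(1)] na_def by simp
  have anr: "cmp X na rho \<in> Hom X (src X h') Y" and gt: "cmp X g t \<in> Hom X (src X h') Y"
    using cmp_Hom d''(9) nah d''(5) g by blast+
  define beta' where "beta' = madd X (cmp X na rho) (cmp X g t)"
  have b'h: "beta' \<in> Hom X (src X h') Y" using madd_Hom[OF anr gt] beta'_def by simp
  have zE: "push X g eps \<in> E X (tgt X y) Y" using push_E[OF eE g] .
  have "push X beta' d'' = eadd X (push X na gam) (push X g eps)"
    using push_madd[OF d''(10) anr gt] push_cmp[OF d''(10) d''(9) nah] push_cmp[OF d''(10) d''(5) g]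
      d''(11,12) beta'_def by simp
  also have "\<dots> = ezero X (tgt X y) Y"
    using push_mneg[OF gam a(2)] eq GY.add_neg_left[OF zE] na_def by simp
  finally obtain beta where bh: "beta \<in> Hom X (tgt X u) Y" and bb: "cmp X beta h' = beta'"
    using exact_cmp_inflation[OF d''(1) d''(10) b'h] HomD(3)[OF d''(3)] by auto
  have "cmp X beta u = madd X (cmp X (cmp X na rho) s) (cmp X (cmp X g t) s)"
    using d''(4) cmp_assoc[OF d''(2,3) bh] bb cmp_madd_right[OF anr gt d''(2)] beta'_def by simp
  also have "cmp X (cmp X g t) s = mzero X B Y"
    using cmp_assoc[OF d''(2,5) g] d''(6) cmp_mzero_right[OF g Ob(1)] by simp
  finally have "cmp X beta u = madd X (cmp X (cmp X na rho) s) (mzero X B Y)" .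
  also have "\<dots> = cmp X (cmp X na rho) s"
    using abelian_group_on.add_zero_right[OF Hom_group[OF Ob(1,2)] cmp_Hom[OF d''(2) anr]] .
  finally have "cmp X beta u \<in> K"
    using ideal_cmp_right[OF K ideal_cmp_right[OF K naK nah d''(9)] anr d''(2)] by simp
  then have bK: "beta \<in> K"
    using propC_cmp_inflation[OF C ru _ bh] I HomD(3)[OF wh] by simp
  have "cmp X beta (cmp X h' sig) = madd X (cmp X (cmp X na rho) sig) g"
    using cmp_assoc[OF d''(7,3) bh] bb cmp_madd_right[OF anr gt d''(7)] cmp_assoc[OF d''(7,5) g]
      d''(8) cmp_idm_right[OF g] beta'_def by simp
  moreover have "cmp X beta (cmp X h' sig) \<in> K"
    using ideal_cmp_right[OF K bK bh cmp_Hom[OF d''(7,3)]] .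
  ultimately show ?thesis
    using ideal_madd_cancel
        [OF K ideal_cmp_right[OF K ideal_cmp_right[OF K naK nah d''(9)] anr d''(7)]
        cmp_Hom[OF d''(7) anr] g] by simp
qed

end

locale extriangulated_with_subfunctor = extriangulated_category +
  fixes F :: "'e set"
  assumes enough_inj: "enough_inj_obj X" and enough_proj: "enough_proj_mor X"
    and subfunctor: "additive_subfunctor X F" and enough_inj_morphisms: "enough_inj_mor X F"
begin

lemma phantom_deflation_triangle:
  assumes C: "C \<in> Ob X"
  obtains gam k p e x' phi b where "real X gam k p" "gam \<in> E X C (src X k)"
    "e \<in> F_inj X F" "e \<in> Hom X (src X k) (tgt X e)"
    "real X (push X e gam) x' phi" "phi \<in> Ph X F" "phi \<in> Hom X (tgt X x') C"
    "tri_morph X gam k p (push X e gam) x' phi e b (idm X C)"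
proof -
  obtain gam k p where rg: "real X gam k p" and tp: "tgt X p = C"
    and proj: "\<forall>A\<in>Ob X. \<forall>d\<in>E X C A. pull X p d = ezero X (src X p) A"
    using enough_proj C unfolding enough_proj_mor_def by blast
  have gE: "gam \<in> E X C (src X k)" using real_E[OF rg] tp by simp
  obtain eta e f where eF: "eta \<in> F" and re: "real X eta e f" and se: "src X e = src X k"
    and ei: "e \<in> F_inj X F"
    using enough_inj_morphisms E_Ob(2)[OF gE] unfolding enough_inj_mor_def by blast
  have eE: "eta \<in> E X (tgt X f) (src X k)" using real_E[OF re] se by simp
  have eh: "e \<in> Hom X (src X k) (tgt X e)" using real_Hom[OF re eE] by simp
  have dE: "push X e gam \<in> E X C (tgt X e)" using push_E[OF gE eh] .
  obtain x' phi where rd: "real X (push X e gam) x' phi" using real_exists E_Ex[OF dE] by blast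
  have ph: "phi \<in> Hom X (tgt X x') C" using real_Hom[OF rd dE] by simp
  have phi: "phi \<in> Ph X F"
    using deflation_of_pushout_in_Ph[OF subfunctor rg gE _ re eF eE rd] proj by blast
  have "e \<in> Hom X (eA X gam) (eA X (push X e gam))"
    "idm X C \<in> Hom X (eC X gam) (eC X (push X e gam))"
    using eh gE dE idm_Hom[OF C] by (simp_all add: E_iff)
  then have "\<exists>b\<in>Hom X (tgt X k) (tgt X x').
      cmp X b k = cmp X x' e \<and> cmp X phi b = cmp X (idm X C) p"
    by (rule realization_lift[OF rg rd]) (use pull_idm[OF dE] in simp)
  then obtain b where b: "b \<in> Hom X (tgt X k) (tgt X x')" "cmp X b k = cmp X x' e"
    "cmp X phi b = cmp X (idm X C) p" by blast
  have tm: "tri_morph X gam k p (push X e gam) x' phi e b (idm X C)"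
    unfolding tri_morph_def
    using eh b real_Hom[OF rg gE] real_eA[OF rd] dE tp HomD(3)[OF ph] idm_Hom[OF C] pull_idm[OF dE]
    by (simp add: E_iff)
  show ?thesis by (rule that[OF rg gE ei eh rd phi ph tm])
qed

lemma special_precovering_perpL_F_inj: "special_precovering X (perpL X (F_inj X F))"
  unfolding special_precovering_def
proof
  fix C assume C: "C \<in> Ob X"
  obtain gam k p e x' phi b where rg: "real X gam k p" and gE: "gam \<in> E X C (src X k)"
    and e: "e \<in> F_inj X F" "e \<in> Hom X (src X k) (tgt X e)" and rd: "real X (push X e gam) x' phi"
    and phi: "phi \<in> Ph X F" "phi \<in> Hom X (tgt X x') C"
    and tm: "tri_morph X gam k p (push X e gam) x' phi e b (idm X C)"
    using phantom_deflation_triangle[OF C] by blast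
  have "e \<in> perpR X (perpL X (F_inj X F))"
    using subsetD[OF subset_perpR_perpL[OF F_inj_subset_Mor] e(1)] .
  then have "real X gam k p \<and> real X (push X e gam) x' phi \<and> tgt X p = C \<and>
      tri_morph X gam k p (push X e gam) x' phi e b (idm X C) \<and> e \<in> perpR X (perpL X (F_inj X F))"
    using rg rd tm real_eC[OF rg] gE by (simp add: E_iff)
  then have "\<exists>d x y d' x' j b. real X d x y \<and> real X d' x' phi \<and> tgt X y = C \<and>
      tri_morph X d x y d' x' phi j b (idm X C) \<and> j \<in> perpR X (perpL X (F_inj X F))"
    by (intro exI)
  moreover have "phi \<in> perpL X (F_inj X F)" using Ph_subset_perpL_F_inj phi(1) by blast
  ultimately show "\<exists>i\<in>perpL X (F_inj X F). tgt X i = C \<and>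
     (\<exists>d x y d' x' j b. real X d x y \<and> real X d' x' i \<and> tgt X y = C \<and>
        tri_morph X d x y d' x' i j b (idm X C) \<and> j \<in> perpR X (perpL X (F_inj X F)))"
    using HomD(3)[OF phi(2)] by blast
qed

lemma preenvelope_triangle:
  assumes A: "A \<in> Ob X"
  obtains d e n d' x y b phi where "real X d e n" "src X e = A" "real X d' x y" "src X x = A"
    "tri_morph X d e n d' x y (idm X A) b phi" "phi \<in> Ph X F"
    "e \<in> perpR X (perpL X (F_inj X F))" "d = pull X phi d'" "d' \<in> E X (tgt X phi) A"
proof -
  obtain eps x y where re: "real X eps x y" and sx: "src X x = A" and I: "inj_obj X (tgt X x)"
    using enough_inj A unfolding enough_inj_obj_def by blast
  have eE: "eps \<in> E X (tgt X y) A" using real_E[OF re] sx by simp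
  obtain gam k p e1 x' phi b where "real X gam k p" and gE: "gam \<in> E X (tgt X y) (src X k)"
    and e1: "e1 \<in> F_inj X F" "e1 \<in> Hom X (src X k) (tgt X e1)"
    and rd: "real X (push X e1 gam) x' phi"
    and phi: "phi \<in> Ph X F" "phi \<in> Hom X (tgt X x') (tgt X y)"
    and "tri_morph X gam k p (push X e1 gam) x' phi e1 b (idm X (tgt X y))"
    using phantom_deflation_triangle[OF E_Ob(1)[OF eE]] by blast
  have dE: "push X e1 gam \<in> E X (tgt X y) (tgt X e1)" using push_E[OF gE e1(2)] .
  have ddE: "pull X phi eps \<in> E X (tgt X x') A" using pull_E[OF eE phi(2)] .
  obtain e n where rde: "real X (pull X phi eps) e n" using real_exists E_Ex[OF ddE] by blast
  have eh: "e \<in> Hom X A (tgt X e)" using real_Hom[OF rde ddE] by simp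
  have perp: "e \<in> perpR X (perpL X (F_inj X F))"
  proof (rule inflation_of_pullback_in_perpR[OF perpL_ideal re I eE rd dE _ rde])
    show "F_inj X F \<subseteq> Mor X" by (rule F_inj_subset_Mor)
    show "pull X m (push X e1 gam) = ezero X (src X m) (tgt X e1)"
      if "m \<in> perpL X (F_inj X F)" "tgt X m = tgt X y" for m
      using perpLD[OF that(1) e1(1)] gE that(2) HomD(2)[OF e1(2)] by simp
  qed
  have "idm X A \<in> Hom X (eA X (pull X phi eps)) (eA X eps)"
    "phi \<in> Hom X (eC X (pull X phi eps)) (eC X eps)"
    using idm_Hom[OF A] ddE eE phi(2) by (simp_all add: E_iff)
  then have "\<exists>b\<in>Hom X (tgt X e) (tgt X x). cmp X b e = cmp X x (idm X A) \<and> cmp X y b = cmp X phi n"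
    by (rule realization_lift[OF rde re]) (use push_idm[OF ddE] in simp)
  then obtain b where b: "b \<in> Hom X (tgt X e) (tgt X x)" "cmp X b e = cmp X x (idm X A)"
    "cmp X y b = cmp X phi n" by blast
  have tm: "tri_morph X (pull X phi eps) e n eps x y (idm X A) b phi" unfolding tri_morph_def
    using b HomD(2)[OF eh] sx idm_Hom[OF A] real_eC[OF rde] ddE phi(2) push_idm[OF ddE]
    by (simp add: E_iff)
  have "eps \<in> E X (tgt X phi) A" using eE HomD(3)[OF phi(2)] by simp
  then show ?thesis by (rule that[OF rde HomD(2)[OF eh] re sx tm phi(1) perp refl])
qed

lemma special_preenveloping_perpR_perpL_F_inj:
  "special_preenveloping X (perpR X (perpL X (F_inj X F)))"
  unfolding special_preenveloping_def
proof
  fix A assume A: "A \<in> Ob X"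
  obtain d e n d' x y b phi where H: "real X d e n" "src X e = A" "real X d' x y" "src X x = A"
    "tri_morph X d e n d' x y (idm X A) b phi" and phi: "phi \<in> Ph X F"
    and e: "e \<in> perpR X (perpL X (F_inj X F))" and "d = pull X phi d'" "d' \<in> E X (tgt X phi) A"
    using preenvelope_triangle[OF A] by blast
  have "phi \<in> perpL X (perpR X (perpL X (F_inj X F)))"
    using subset_perpL_perpR[OF perpL_subset_Mor] Ph_subset_perpL_F_inj phi
    by (rule subsetD[OF _ subsetD])
  with H have "\<exists>d y d' x' y' b j. real X d e y \<and> real X d' x' y' \<and> src X x' = A \<and>
      tri_morph X d e y d' x' y' (idm X A) b j \<and> j \<in> perpL X (perpR X (perpL X (F_inj X F)))"
    by (intro exI conjI)
  with H(2) e show "\<exists>e\<in>perpR X (perpL X (F_inj X F)). src X e = A \<and>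
     (\<exists>d y d' x' y' b j. real X d e y \<and> real X d' x' y' \<and> src X x' = A \<and>
        tri_morph X d e y d' x' y' (idm X A) b j \<and> j \<in> perpL X (perpR X (perpL X (F_inj X F))))"
    by blast
qed

lemma perpR_Ph_subset_ideal:
  assumes K: "ideal X K" and FK: "F_inj X F \<subseteq> K" and C: "propC X K"
  shows "perpR X (Ph X F) \<subseteq> K"
proof
  fix g assume g: "g \<in> perpR X (Ph X F)"
  have gh: "g \<in> Hom X (src X g) (tgt X g)" using Mor_Hom[OF perpR_Mor[OF g]] .
  obtain eps x y where re: "real X eps x y" and sx: "src X x = src X g" and I: "inj_obj X (tgt X x)"
    using enough_inj Hom_Ob(1)[OF gh] unfolding enough_inj_obj_def by blast
  have eE: "eps \<in> E X (tgt X y) (src X g)" using real_E[OF re] sx by simp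
  obtain gam k p e x' phi b where "real X gam k p" and gE: "gam \<in> E X (tgt X y) (src X k)"
    and e: "e \<in> F_inj X F" "e \<in> Hom X (src X k) (tgt X e)" and rd: "real X (push X e gam) x' phi"
    and phi: "phi \<in> Ph X F" "phi \<in> Hom X (tgt X x') (tgt X y)"
    and "tri_morph X gam k p (push X e gam) x' phi e b (idm X (tgt X y))"
    by (rule phantom_deflation_triangle[OF E_Ob(1)[OF eE]])
  have "pull X phi (push X g eps) = ezero X (src X phi) (tgt X g)"
    using perpRD[OF g phi(1)] eE HomD(3)[OF phi(2)] by simp
  then obtain w where w: "w \<in> Hom X (tgt X e) (tgt X g)"
    and gw: "push X g eps = push X w (push X e gam)"
    using exact_pull_deflation[OF rd push_E[OF gE e(2)] push_E[OF eE gh]] by blast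
  show "g \<in> K"
  proof (rule mem_ideal_if_push_eq_push_mem[OF K C re I eE gE gh])
    show "cmp X w e \<in> K" using ideal_cmp_left[OF K _ e(2) w] e(1) FK by blast
    show "cmp X w e \<in> Hom X (src X k) (tgt X g)" using cmp_Hom[OF e(2) w] .
    show "push X g eps = push X (cmp X w e) gam" using gw push_cmp[OF gE e(2) w] by simp
  qed
qed

lemma star_Ph_enough_special_inj_mor: "enough_special_inj_mor X (star X (Ph X F))"
  unfolding enough_special_inj_mor_def
proof
  fix A assume A: "A \<in> Ob X"
  obtain d e n d' x y b phi where H: "real X d e n" "src X e = A" "real X d' x y" "src X x = A"
    "tri_morph X d e n d' x y (idm X A) b phi" "phi \<in> Ph X F"
    "e \<in> perpR X (perpL X (F_inj X F))" "d = pull X phi d'" "d' \<in> E X (tgt X phi) A"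
    by (rule preenvelope_triangle[OF A])
  have dS: "d \<in> star X (Ph X F)" using starI[OF H(6) H(9)] H(8) by simp
  have "e \<in> perpR X (Ph X F)" using H(7) perpR_antimono[OF Ph_subset_perpL_F_inj] by blast
  then have eF: "e \<in> F_inj X (star X (Ph X F))" using perpR_eq_F_inj_star[OF Ph_subset_Mor] by simp
  have "phi \<in> Ph X (star X (Ph X F))"
    using starI[OF H(6)] Ph_Mor[OF H(6)] by (auto intro!: PhI)
  then show "\<exists>d e y. d \<in> star X (Ph X F) \<and> real X d e y \<and> src X e = A \<and>
      e \<in> F_inj X (star X (Ph X F)) \<and>
      (\<exists>d' x' y' b \<phi>. real X d' x' y' \<and> src X x' = A \<and>
          tri_morph X d e y d' x' y' (idm X A) b \<phi> \<and> \<phi> \<in> Ph X (star X (Ph X F)))"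
    using dS H(1-5) eF by blast
qed

lemma subfunctor_with_enough_special_inj_mor_subset_star_Ph:
  assumes F': "additive_subfunctor X F'" and sub: "F' \<subseteq> F"
    and special: "enough_special_inj_mor X F'"
  shows "F' \<subseteq> star X (Ph X F)"
proof
  fix del assume del: "del \<in> F'"
  have dE: "del \<in> E X (eC X del) (eA X del)"
    using subfunctor_subset_Ex[OF F'] del by (auto simp: E_iff)
  obtain d e y d' x' y' b phi where H: "d \<in> F'" "real X d e y" "src X e = eA X del"
    "e \<in> F_inj X F'" "real X d' x' y'" "src X x' = eA X del"
    "tri_morph X d e y d' x' y' (idm X (eA X del)) b phi" "phi \<in> Ph X F'"
    using special E_Ob(2)[OF dE] unfolding enough_special_inj_mor_def by blast
  have dE2: "d \<in> E X (tgt X y) (eA X del)" using real_E[OF H(2)] H(3) by simp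
  have "push X e del = ezero X (eC X del) (tgt X e)" using F_injD[OF H(4) del] H(3) by simp
  then obtain c where c: "c \<in> Hom X (eC X del) (tgt X y)" and dc: "del = pull X c d"
    using exact_push_inflation[OF H(2) dE2 dE] by blast
  note T = tri_morphD[OF H(7)]
  have phh: "phi \<in> Hom X (tgt X y) (tgt X y')" using T by simp
  have d'E: "d' \<in> E X (tgt X y') (eA X del)" using real_E[OF H(5)] H(6) by simp
  have "d = pull X phi d'" using T push_idm[OF dE2] by simp
  then have "del = pull X (cmp X phi c) d'" using dc pull_cmp[OF d'E phh c] by simp
  moreover have "cmp X phi c \<in> Ph X F"
    using Ph_cmp_right[OF subfunctor _ c[folded HomD(2)[OF phh]]] Ph_mono[OF sub, of X] H(8)
    by blast
  ultimately show "del \<in> star X (Ph X F)"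
    using starI d'E HomD(3)[OF cmp_Hom[OF c phh]] by metis
qed


lemma complete_cotorsion_pair_perpL_F_inj:
  "ideal X (perpL X (F_inj X F)) \<and> ideal X (perpR X (perpL X (F_inj X F))) \<and>
    complete_cotorsion_pair X (perpL X (F_inj X F)) (perpR X (perpL X (F_inj X F)))"
  unfolding complete_cotorsion_pair_def cotorsion_pair_def
  using perpL_ideal[OF F_inj_subset_Mor] perpR_ideal[OF perpL_subset_Mor]
    perpL_perpR_perpL[OF F_inj_subset_Mor[of X F]] special_precovering_perpL_F_inj
    special_preenveloping_perpR_perpL_F_inj
  by simp

lemma perpR_Ph_least_ideal_with_propC:
  "perpR X (Ph X F) = F_inj X (star X (Ph X F)) \<and>
    ideal X (perpR X (Ph X F)) \<and> F_inj X F \<subseteq> perpR X (Ph X F) \<and> propC X (perpR X (Ph X F)) \<and>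
    (\<forall>K. ideal X K \<and> F_inj X F \<subseteq> K \<and> propC X K \<longrightarrow> perpR X (Ph X F) \<subseteq> K)"
  using perpR_eq_F_inj_star[OF Ph_subset_Mor] perpR_ideal[OF Ph_subset_Mor] F_inj_subset_perpR_Ph
    propC_perpR[OF Ph_subset_Mor] perpR_Ph_subset_ideal
  by simp

lemma star_Ph_greatest_with_enough_special_inj_mor:
  "additive_subfunctor X (star X (Ph X F)) \<and> star X (Ph X F) \<subseteq> F \<and>
    enough_special_inj_mor X (star X (Ph X F)) \<and>
    (\<forall>F'. additive_subfunctor X F' \<and> F' \<subseteq> F \<and> enough_special_inj_mor X F' \<longrightarrow>
      F' \<subseteq> star X (Ph X F))"
  using star_Ph_subfunctor[OF subfunctor] star_Ph_subset star_Ph_enough_special_inj_mor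
    subfunctor_with_enough_special_inj_mor_subset_star_Ph
  by simp

end

theorem theorem4p6:
  fixes X :: "('o, 'm, 'e) etcat" and F :: "'e set"
  assumes "extriangulated X"
    and "enough_inj_obj X"
    and "enough_proj_mor X"
    and "additive_subfunctor X F"
    and "enough_inj_mor X F"
  shows "(ideal X (perpL X (F_inj X F)) \<and> ideal X (perpR X (perpL X (F_inj X F))) \<and>
          complete_cotorsion_pair X (perpL X (F_inj X F)) (perpR X (perpL X (F_inj X F))))
       \<and> (perpR X (Ph X F) = F_inj X (star X (Ph X F)) \<and>
          ideal X (perpR X (Ph X F)) \<and> F_inj X F \<subseteq> perpR X (Ph X F) \<and>
          propC X (perpR X (Ph X F)) \<and>
          (\<forall>K. ideal X K \<and> F_inj X F \<subseteq> K \<and> propC X K \<longrightarrow> perpR X (Ph X F) \<subseteq> K))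
       \<and> (additive_subfunctor X (star X (Ph X F)) \<and> star X (Ph X F) \<subseteq> F \<and>
          enough_special_inj_mor X (star X (Ph X F)) \<and>
          (\<forall>F'. additive_subfunctor X F' \<and> F' \<subseteq> F \<and> enough_special_inj_mor X F'
                 \<longrightarrow> F' \<subseteq> star X (Ph X F)))"
proof -
  interpret extriangulated_with_subfunctor X F
    using assms by unfold_locales
  show ?thesis
    by (intro conjI[OF complete_cotorsion_pair_perpL_F_inj]
        conjI[OF perpR_Ph_least_ideal_with_propC star_Ph_greatest_with_enough_special_inj_mor])
qed

end
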